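(* Let $(\Omega,\mathcal{H},\mathbb{E})$ be a sub-linear expectation space satisfying condition (CC) with family $\mathcal{P}$, let $\mathbb{V}$ be a sub-additive capacity on $\mathcal{F}$ such that $\mathbb{E}[f]\le\mathbb{V}(A)\le\mathbb{E}[g]$ whenever $f\le I_A\le g$, $f,g\in\mathcal{H}$, $A\in\mathcal{F}$, and let $\mathcal{V}(A)=1-\mathbb{V}(A^c)$. (i) If $\{X_n;n\ge1\}$ is a sequence of independent random variables with $\sum_{n=1}^\infty\mathcal{V}(X_n<1)<\infty$, then there exists $P\in\mathcal{P}$ with $P(X_i<1\ \text{i.o.})=0$. (ii) If $\{\mathbf{X}_n;n\ge1\}$ is a sequence of independent random vectors, $\mathbf{X}_n$ being $d_n$-dimensional, and $f_{n,j}:\mathbb{R}^{d_n}\to\mathbb{R}$ are locally Lipschitz functions of polynomial growth (i.e. $|f(x)-f(y)|\le C(1+|x|^k+|y|^k)|x-y|$) with $\sum_{n=1}^\infty\mathbb{V}(f_{n,j}(\mathbf{X}_n)\ge1)=\infty$ for each $j=1,2,\dots$, then there exists $P\in\mathcal{P}$ with $$P\left(\bigcap_{j=1}^\infty\{f_{n,j}(\mathbf{X}_n)\ge1\ \text{i.o.}\}\right)=1.$$ (iii) Let $\{\mathbf{X}_n;n\ge1\}$ be a sequence of independent random vectors, $\mathbf{X}_n$ being $d_n$-dimensional. If $F_n\subset\mathbb{R}^{d_n}$ are closed sets with $\sum_{n=1}^\infty\mathcal{V}(\mathbf{X}_n\notin F_n)<\infty$, then there exists $P\in\mathcal{P}$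 with $P(\mathbf{X}_n\notin F_n\ \text{i.o.})=0$. If $F_{n,j}\subset\mathbb{R}^{d_n}$ are closed sets with $\sum_{n=1}^\infty\mathbb{V}(\mathbf{X}_n\in F_{n,j})=\infty$ for each $j=1,2,\dots$, then there exists $P\in\mathcal{P}$ with $$P\left(\bigcap_{j=1}^\infty\{\mathbf{X}_n\in F_{n,j}\ \text{i.o.}\}\right)=1.$$
   Context: A sub-linear expectation space $(\Omega,\mathcal{H},\mathbb{E})$: $(\Omega,\mathcal{F})$ measurable space, $\mathcal{H}$ a linear space of real functions on $\Omega$ closed under composition with locally Lipschitz functions of polynomial growth; $\mathbb{E}$ monotone, constant preserving, sub-additive, positively homogeneous. A capacity $V:\mathcal{F}\to[0,1]$ satisfies $V(\emptyset)=0$, $V(\Omega)=1$, and monotonicity; it is sub-additive if $V(A\cup B)\le V(A)+V(B)$. Random vectors have components in $\mathcal{H}$. Independence: $Y$ is independent of $X$ if $\mathbb{E}[\varphi(X,Y)]=\mathbb{E}\big[\mathbb{E}[\varphi(x,Y)]|_{x=X}\big]$ for all bounded Lipschitz $\varphi$; a sequence is independent if each term is independent of all preceding ones. Condition (CC): $\mathbb{E}[X]=\sup_{P\in\mathcal{P}}P[X]$ for bounded $X\in\mathcal{H}$, where $\mathcal{P}$ is a family of probability measures on $(\Omega,\sigma(\mathcal{H}))$ such that for any bounded $Y_1,Y_2,\dots\in\mathcal{H}$ and any $\{P_n\}\subset\mathcal{P}$ there exist a subsequence $\{n_k\}$ and $P\in\mathcal{P}$ with $P_{n_k}[\varphi(Y_1,\dots,Y_d)]\to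 P[\varphi(Y_1,\dots,Y_d)]$ for all bounded Lipschitz $\varphi$ on $\mathbb{R}^d$, $d\ge1$. *)

theory Defs
  imports "HOL-Probability.Probability"
begin

text \<open>Finite-dimensional Euclidean vectors are encoded as functions 'i => real whose
relevant coordinates form a finite index set I; R^d corresponds to I = {..<d}.\<close>

definition vnorm :: "'i set \<Rightarrow> ('i \<Rightarrow> real) \<Rightarrow> real" where
  "vnorm I x = sqrt (\<Sum>i\<in>I. (x i)\<^sup>2)"

definition lip_poly :: "'i set \<Rightarrow> (('i \<Rightarrow> real) \<Rightarrow> real) \<Rightarrow> bool" where
  "lip_poly I f \<longleftrightarrow> (\<exists>C (m::nat). \<forall>x y.
      \<bar>f x - f y\<bar> \<le> C * (1 + vnorm I x ^ m + vnorm I y ^ m) * vnorm I (\<lambda>i. x i - y i))"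

definition bdd_lip :: "'i set \<Rightarrow> (('i \<Rightarrow> real) \<Rightarrow> real) \<Rightarrow> bool" where
  "bdd_lip I f \<longleftrightarrow> (\<exists>C L. (\<forall>x. \<bar>f x\<bar> \<le> C) \<and>
      (\<forall>x y. \<bar>f x - f y\<bar> \<le> L * vnorm I (\<lambda>i. x i - y i)))"

definition bdd_lip2 :: "'i set \<Rightarrow> 'j set \<Rightarrow> (('i \<Rightarrow> real) \<Rightarrow> ('j \<Rightarrow> real) \<Rightarrow> real) \<Rightarrow> bool" where
  "bdd_lip2 I J f \<longleftrightarrow> (\<exists>C L. (\<forall>x y. \<bar>f x y\<bar> \<le> C) \<and>
      (\<forall>x y x' y'. \<bar>f x y - f x' y'\<bar> \<le>
          L * sqrt ((vnorm I (\<lambda>i. x i - x' i))\<^sup>2 + (vnorm J (\<lambda>j. y j - y' j))\<^sup>2)))"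

text \<open>Sub-linear expectation space (Omega = UNIV of type 'a).\<close>
definition sublinear_expectation_space ::
    "('a \<Rightarrow> real) set \<Rightarrow> (('a \<Rightarrow> real) \<Rightarrow> real) \<Rightarrow> bool" where
  "sublinear_expectation_space H E \<longleftrightarrow>
     (\<forall>X\<in>H. \<forall>Y\<in>H. (\<lambda>\<omega>. X \<omega> + Y \<omega>) \<in> H) \<and>
     (\<forall>X\<in>H. \<forall>c::real. (\<lambda>\<omega>. c * X \<omega>) \<in> H) \<and>
     (\<forall>n::nat. \<forall>X::nat \<Rightarrow> 'a \<Rightarrow> real. \<forall>\<phi>. (\<forall>i<n. X i \<in> H) \<longrightarrow> lip_poly {..<n} \<phi> \<longrightarrow>
         (\<lambda>\<omega>. \<phi> (\<lambda>i. X i \<omega>)) \<in> H) \<and>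
     (\<forall>X\<in>H. \<forall>Y\<in>H. (\<forall>\<omega>. X \<omega> \<ge> Y \<omega>) \<longrightarrow> E X \<ge> E Y) \<and>
     (\<forall>c. E (\<lambda>_. c) = c) \<and>
     (\<forall>X\<in>H. \<forall>Y\<in>H. E (\<lambda>\<omega>. X \<omega> + Y \<omega>) \<le> E X + E Y) \<and>
     (\<forall>X\<in>H. \<forall>a\<ge>0. E (\<lambda>\<omega>. a * X \<omega>) = a * E X)"

definition sigma_H :: "('a \<Rightarrow> real) set \<Rightarrow> 'a set set" where
  "sigma_H H = sigma_sets UNIV {X -` B | X B. X \<in> H \<and> B \<in> sets borel}"

definition condition_CC ::
    "('a \<Rightarrow> real) set \<Rightarrow> (('a \<Rightarrow> real) \<Rightarrow> real) \<Rightarrow> 'a measure set \<Rightarrow> bool" where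
  "condition_CC H E \<P> \<longleftrightarrow>
     (\<forall>P\<in>\<P>. prob_space P \<and> space P = UNIV \<and> sets P = sigma_H H) \<and>
     (\<forall>X\<in>H. bounded (range X) \<longrightarrow> E X = (SUP P\<in>\<P>. integral\<^sup>L P X)) \<and>
     (\<forall>Y::nat \<Rightarrow> 'a \<Rightarrow> real. \<forall>Ps::nat \<Rightarrow> 'a measure.
        (\<forall>i. Y i \<in> H \<and> bounded (range (Y i))) \<longrightarrow> (\<forall>n. Ps n \<in> \<P>) \<longrightarrow>
        (\<exists>r P. strict_mono r \<and> P \<in> \<P> \<and>
           (\<forall>d\<ge>1. \<forall>\<phi>. bdd_lip {..<d} \<phi> \<longrightarrow>
              (\<lambda>k. integral\<^sup>L (Ps (r k)) (\<lambda>\<omega>. \<phi> (\<lambda>i. Y i \<omega>)))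
                \<longlonglongrightarrow> integral\<^sup>L P (\<lambda>\<omega>. \<phi> (\<lambda>i. Y i \<omega>)))))"

definition subadd_capacity :: "'a set set \<Rightarrow> ('a set \<Rightarrow> real) \<Rightarrow> bool" where
  "subadd_capacity F V \<longleftrightarrow>
     V {} = 0 \<and> V UNIV = 1 \<and> (\<forall>A\<in>F. 0 \<le> V A \<and> V A \<le> 1) \<and>
     (\<forall>A\<in>F. \<forall>B\<in>F. A \<subseteq> B \<longrightarrow> V A \<le> V B) \<and>
     (\<forall>A\<in>F. \<forall>B\<in>F. V (A \<union> B) \<le> V A + V B)"

definition capacity_between ::
    "('a \<Rightarrow> real) set \<Rightarrow> (('a \<Rightarrow> real) \<Rightarrow> real) \<Rightarrow> 'a set set \<Rightarrow> ('a set \<Rightarrow> real) \<Rightarrow> bool" where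
  "capacity_between H E F V \<longleftrightarrow>
     (\<forall>A\<in>F. \<forall>f\<in>H. \<forall>g\<in>H. (\<forall>\<omega>. f \<omega> \<le> indicator A \<omega> \<and> indicator A \<omega> \<le> g \<omega>) \<longrightarrow>
        E f \<le> V A \<and> V A \<le> E g)"

definition conj_cap :: "('a set \<Rightarrow> real) \<Rightarrow> 'a set \<Rightarrow> real" where
  "conj_cap V A = 1 - V (- A)"

text \<open>Y (indexed by J) is independent of X (indexed by I) under E.\<close>
definition indep_vec ::
    "(('a \<Rightarrow> real) \<Rightarrow> real) \<Rightarrow> 'i set \<Rightarrow> ('a \<Rightarrow> 'i \<Rightarrow> real) \<Rightarrow> 'j set \<Rightarrow> ('a \<Rightarrow> 'j \<Rightarrow> real) \<Rightarrow> bool" where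
  "indep_vec E I X J Y \<longleftrightarrow> (\<forall>\<phi>. bdd_lip2 I J \<phi> \<longrightarrow>
      E (\<lambda>\<omega>. \<phi> (X \<omega>) (Y \<omega>)) = E (\<lambda>\<omega>. E (\<lambda>\<omega>'. \<phi> (X \<omega>) (Y \<omega>'))))"

definition random_vec :: "('a \<Rightarrow> real) set \<Rightarrow> nat \<Rightarrow> ('a \<Rightarrow> nat \<Rightarrow> real) \<Rightarrow> bool" where
  "random_vec H d X \<longleftrightarrow> (\<forall>i<d. (\<lambda>\<omega>. X \<omega> i) \<in> H)"

definition indep_seq_vec ::
    "('a \<Rightarrow> real) set \<Rightarrow> (('a \<Rightarrow> real) \<Rightarrow> real) \<Rightarrow> (nat \<Rightarrow> nat) \<Rightarrow> (nat \<Rightarrow> 'a \<Rightarrow> nat \<Rightarrow> real) \<Rightarrow> bool" where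
  "indep_seq_vec H E d X \<longleftrightarrow> (\<forall>n. random_vec H (d n) (X n)) \<and>
     (\<forall>n. indep_vec E {(k, i). k < n \<and> i < d k} (\<lambda>\<omega> (k, i). X k \<omega> i) {..<d n} (X n))"

definition indep_seq_rv ::
    "('a \<Rightarrow> real) set \<Rightarrow> (('a \<Rightarrow> real) \<Rightarrow> real) \<Rightarrow> (nat \<Rightarrow> 'a \<Rightarrow> real) \<Rightarrow> bool" where
  "indep_seq_rv H E X \<longleftrightarrow> indep_seq_vec H E (\<lambda>_. 1) (\<lambda>n \<omega> _. X n \<omega>)"

definition trunc :: "nat \<Rightarrow> (nat \<Rightarrow> real) \<Rightarrow> nat \<Rightarrow> real" where
  "trunc d x = (\<lambda>i. if i < d then x i else 0)"

text \<open>Closed subset of R^d, R^d embedded as {x. x i = 0 for i >= d} (a closed subspace of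
 the product space nat => real, carrying the Euclidean topology).\<close>
definition closed_Rd :: "nat \<Rightarrow> (nat \<Rightarrow> real) set \<Rightarrow> bool" where
  "closed_Rd d F \<longleftrightarrow> F \<subseteq> {x. \<forall>i\<ge>d. x i = 0} \<and> closed F"

end

theory Submission
  imports Defs
begin

(* Put Y_n = delta_n(X_n), where delta_n(x) = min 1 (infdist x F_n) vanishes exactly on the
   closed set F_n, and bound the indicator of {Y_n = 0} from above by the bounded Lipschitz
   cut-off ramp k (Y_n) = clip (1 - k Y_n). Group the indices into consecutive blocks. In each
   single variable the function sum_l (1 - prod_{m in block l} (1 - ramp k (Y_m))) is affine with
   a nonnegative slope, so independence lets the variables be replaced one by one by their
   sub-linear expectations:
     E [sum_{l<L} (1 - prod (1 - ramp k (Y_m)))] = sum_{l<L} (1 - prod (1 - E [ramp k (Y_m)])),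
   and E [ramp k (Y_m)] >= V (Y_m = 0). As E is the supremum of the integrals over the family P,
   some member P of the family integrates sum_{l<L} prod (1 - ramp k (Y_m)) by at most C + 1, where C bounds
   sum_l prod (1 - V (Y_m = 0)). Condition (CC) turns these into a single P that works for all k
   and L; letting k tend to infinity gives sum_l P (no Y_m in block l vanishes) <= C + 1, and the
   Borel-Cantelli lemma under P concludes. One-point blocks give the convergence statements. For
   the divergence statements, block l is assigned to the row j = fst (prod_decode l) and made so
   long that the capacities V (X_m in F_{m,j}) over it add up to at least l; then
   prod (1 - V) <= exp (-l) and C = 2. Statements (i) and (ii) are the special cases of the
   closed sets {x >= 1} and {f_{n,j} >= 1}. *)

section \<open>Cut-off functions and Lipschitz functions of finitely many coordinates\<close>

definition ramp :: "nat \<Rightarrow> real \<Rightarrow> real" where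
  "ramp k t = max 0 (min 1 (1 - real k * t))"

lemma ramp_bounds: "0 \<le> ramp k t" "ramp k t \<le> 1"
  by (auto simp: ramp_def)

lemma ramp_zero [simp]: "ramp k 0 = 1"
  by (simp add: ramp_def)

lemma ramp_lipschitz: "\<bar>ramp k t - ramp k s\<bar> \<le> real k * \<bar>t - s\<bar>"
proof -
  have clip: "\<bar>max 0 (min 1 a) - max 0 (min 1 b)\<bar> \<le> \<bar>a - b\<bar>" for a b :: real
    by (auto simp: max_def min_def abs_if)
  have "(1 - real k * t) - (1 - real k * s) = real k * (s - t)"
    by (simp add: algebra_simps)
  then have "\<bar>(1 - real k * t) - (1 - real k * s)\<bar> = real k * \<bar>t - s\<bar>"
    by (simp add: abs_mult abs_minus_commute)
  then show ?thesis
    unfolding ramp_def using clip[of "1 - real k * t" "1 - real k * s"] by simp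
qed

lemma ramp_antimono:
  assumes "0 \<le> t" "k \<le> k'"
  shows "ramp k' t \<le> ramp k t"
proof -
  have "real k * t \<le> real k' * t"
    using assms by (intro mult_right_mono) auto
  then show ?thesis
    unfolding ramp_def by (auto simp: max_def min_def)
qed

lemma one_minus_ramp_tendsto:
  assumes "0 \<le> t"
  shows "(\<lambda>k. 1 - ramp k t) \<longlonglongrightarrow> (if t = 0 then 0 else 1)"
proof (cases "t = 0")
  case False
  with assms have "t > 0" by simp
  then obtain N where N: "1 < real N * t"
    using reals_Archimedean3 by blast
  have "1 - ramp k t = 1" if "N \<le> k" for k
  proof -
    have "real N * t \<le> real k * t"
      using that \<open>t > 0\<close> by (intro mult_right_mono) auto
    with N show ?thesis by (simp add: ramp_def)
  qed
  then have "\<forall>\<^sub>F k in sequentially. 1 - ramp k t = 1"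
    unfolding eventually_sequentially by blast
  with False show ?thesis by (simp add: tendsto_eventually)
qed simp

lemma vnorm_nonneg: "0 \<le> vnorm I x"
  by (simp add: vnorm_def sum_nonneg)

lemma abs_le_vnorm: "finite I \<Longrightarrow> i \<in> I \<Longrightarrow> \<bar>x i\<bar> \<le> vnorm I x"
  unfolding vnorm_def by (metis member_le_sum real_sqrt_abs real_sqrt_le_mono zero_le_power2)

lemma sum_abs_le_vnorm: "(\<Sum>m<N. \<bar>x m\<bar>) \<le> real N * vnorm {..<N} x"
  using sum_mono[of "{..<N}" "\<lambda>m. \<bar>x m\<bar>" "\<lambda>_. vnorm {..<N} x"] abs_le_vnorm[of "{..<N}" _ x]
  by simp

lemma vnorm_block_le:
  fixes x :: "nat \<times> nat \<Rightarrow> real"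
  assumes "m < N"
  shows "vnorm {..<d m} (\<lambda>i. x (m, i)) \<le> vnorm {(k, i). k < N \<and> i < d k} x"
proof -
  have "{(k, i). k < N \<and> i < d k} = (SIGMA k:{..<N}. {..<d k})"
    by auto
  then have fin: "finite {(k, i). k < N \<and> i < d k}"
    by simp
  have "(\<Sum>i<d m. (x (m, i))\<^sup>2) = (\<Sum>p\<in>Pair m ` {..<d m}. (x p)\<^sup>2)"
    by (simp add: sum.reindex inj_on_def)
  also have "\<dots> \<le> (\<Sum>p\<in>{(k, i). k < N \<and> i < d k}. (x p)\<^sup>2)"
    using assms by (intro sum_mono2[OF fin]) auto
  finally show ?thesis
    unfolding vnorm_def by (rule real_sqrt_le_mono)
qed

definition prefix_lipschitz :: "nat \<Rightarrow> ((nat \<Rightarrow> real) \<Rightarrow> real) \<Rightarrow> bool" where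
  "prefix_lipschitz N f \<longleftrightarrow>
     (\<exists>L\<ge>0. \<forall>z z'. \<bar>f z - f z'\<bar> \<le> L * (\<Sum>m<N. \<bar>z m - z' m\<bar>))"

lemma prefix_lipschitzI:
  "0 \<le> L \<Longrightarrow> (\<And>z z'. \<bar>f z - f z'\<bar> \<le> L * (\<Sum>m<N. \<bar>z m - z' m\<bar>)) \<Longrightarrow> prefix_lipschitz N f"
  unfolding prefix_lipschitz_def by blast

lemma prefix_lipschitz_const: "prefix_lipschitz N (\<lambda>_. c)"
  by (rule prefix_lipschitzI[of 0]) auto

lemma prefix_lipschitz_add:
  assumes "prefix_lipschitz N f" "prefix_lipschitz N g"
  shows "prefix_lipschitz N (\<lambda>z. f z + g z)"
proof -
  obtain L1 where "0 \<le> L1" and L1: "\<And>z z'. \<bar>f z - f z'\<bar> \<le> L1 * (\<Sum>m<N. \<bar>z m - z' m\<bar>)"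
    using assms(1) unfolding prefix_lipschitz_def by blast
  obtain L2 where "0 \<le> L2" and L2: "\<And>z z'. \<bar>g z - g z'\<bar> \<le> L2 * (\<Sum>m<N. \<bar>z m - z' m\<bar>)"
    using assms(2) unfolding prefix_lipschitz_def by blast
  have "\<bar>f z + g z - (f z' + g z')\<bar> \<le> (L1 + L2) * (\<Sum>m<N. \<bar>z m - z' m\<bar>)" for z z'
    using L1[of z z'] L2[of z z'] by (simp add: distrib_right abs_le_iff)
  with \<open>0 \<le> L1\<close> \<open>0 \<le> L2\<close> show ?thesis
    by (intro prefix_lipschitzI[of "L1 + L2"]) auto
qed

lemma prefix_lipschitz_cmult:
  assumes "prefix_lipschitz N f"
  shows "prefix_lipschitz N (\<lambda>z. c * f z)"
proof -
  obtain L where "0 \<le> L" and L: "\<And>z z'. \<bar>f z - f z'\<bar> \<le> L * (\<Sum>m<N. \<bar>z m - z' m\<bar>)"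
    using assms unfolding prefix_lipschitz_def by blast
  have "\<bar>c * f z - c * f z'\<bar> \<le> \<bar>c\<bar> * L * (\<Sum>m<N. \<bar>z m - z' m\<bar>)" for z z'
    using mult_left_mono[OF L[of z z'], of "\<bar>c\<bar>"]
    by (simp add: abs_mult mult.assoc flip: right_diff_distrib)
  with \<open>0 \<le> L\<close> show ?thesis
    by (intro prefix_lipschitzI[of "\<bar>c\<bar> * L"]) auto
qed

lemma prefix_lipschitz_diff:
  "prefix_lipschitz N f \<Longrightarrow> prefix_lipschitz N g \<Longrightarrow> prefix_lipschitz N (\<lambda>z. f z - g z)"
  using prefix_lipschitz_add[of N f "\<lambda>z. -1 * g z"] prefix_lipschitz_cmult[of N g "-1"] by simp

lemma prefix_lipschitz_sum:
  "finite S \<Longrightarrow> (\<And>i. i \<in> S \<Longrightarrow> prefix_lipschitz N (f i)) \<Longrightarrow>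
   prefix_lipschitz N (\<lambda>z. \<Sum>i\<in>S. f i z)"
  by (induction S rule: finite_induct) (auto intro: prefix_lipschitz_const prefix_lipschitz_add)

lemma prefix_lipschitz_prod:
  assumes "\<And>i. i \<in> S \<Longrightarrow> prefix_lipschitz N (f i)" and "\<And>i z. i \<in> S \<Longrightarrow> \<bar>f i z\<bar> \<le> 1"
  shows "prefix_lipschitz N (\<lambda>z. \<Prod>i\<in>S. f i z)"
proof -
  obtain L where L: "\<And>i. i \<in> S \<Longrightarrow> 0 \<le> L i \<and>
      (\<forall>z z'. \<bar>f i z - f i z'\<bar> \<le> L i * (\<Sum>m<N. \<bar>z m - z' m\<bar>))"
    using assms(1) unfolding prefix_lipschitz_def by metis
  have "\<bar>(\<Prod>i\<in>S. f i z) - (\<Prod>i\<in>S. f i z')\<bar> \<le> (\<Sum>i\<in>S. L i) * (\<Sum>m<N. \<bar>z m - z' m\<bar>)"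
    for z z'
  proof -
    have "\<bar>(\<Prod>i\<in>S. f i z) - (\<Prod>i\<in>S. f i z')\<bar> \<le> (\<Sum>i\<in>S. \<bar>f i z - f i z'\<bar>)"
      using norm_prod_diff[of S "\<lambda>i. f i z" "\<lambda>i. f i z'"] assms(2) by simp
    also have "\<dots> \<le> (\<Sum>i\<in>S. L i * (\<Sum>m<N. \<bar>z m - z' m\<bar>))"
      using L by (intro sum_mono) blast
    finally show ?thesis
      by (simp add: sum_distrib_right)
  qed
  then show ?thesis
    using L by (intro prefix_lipschitzI[of "\<Sum>i\<in>S. L i"] sum_nonneg) auto
qed

lemma prefix_lipschitz_ramp: "m < N \<Longrightarrow> prefix_lipschitz N (\<lambda>z. ramp k (z m))"
proof (rule prefix_lipschitzI[of "real k"])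
  fix z z' :: "nat \<Rightarrow> real"
  assume "m < N"
  then have "\<bar>z m - z' m\<bar> \<le> (\<Sum>m<N. \<bar>z m - z' m\<bar>)"
    by (intro member_le_sum) auto
  then show "\<bar>ramp k (z m) - ramp k (z' m)\<bar> \<le> real k * (\<Sum>m<N. \<bar>z m - z' m\<bar>)"
    by (meson order_trans ramp_lipschitz mult_left_mono of_nat_0_le_iff)
qed simp

lemma prefix_lipschitz_cong:
  assumes "prefix_lipschitz N f" "\<And>m. m < N \<Longrightarrow> z m = z' m"
  shows "f z = f z'"
proof -
  obtain L where "\<And>z z'. \<bar>f z - f z'\<bar> \<le> L * (\<Sum>m<N. \<bar>z m - z' m\<bar>)"
    using assms(1) unfolding prefix_lipschitz_def by blast
  moreover have "(\<Sum>m<N. \<bar>z m - z' m\<bar>) = 0"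
    using assms(2) by (intro sum.neutral) auto
  ultimately show ?thesis
    by (metis abs_le_zero_iff eq_iff_diff_eq_0 mult_zero_right)
qed

lemma lipschitz_imp_lip_poly:
  assumes "0 \<le> L" "\<And>x y. \<bar>f x - f y\<bar> \<le> L * vnorm I (\<lambda>i. x i - y i)"
  shows "lip_poly I f"
proof -
  have "\<bar>f x - f y\<bar> \<le> L * (1 + vnorm I x ^ 0 + vnorm I y ^ 0) * vnorm I (\<lambda>i. x i - y i)" for x y
  proof -
    have "0 \<le> L * vnorm I (\<lambda>i. x i - y i)"
      using assms(1) by (simp add: vnorm_nonneg)
    moreover have "L * (1 + vnorm I x ^ 0 + vnorm I y ^ 0) * vnorm I (\<lambda>i. x i - y i)
        = 3 * (L * vnorm I (\<lambda>i. x i - y i))"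
      by (simp add: algebra_simps)
    ultimately show ?thesis
      using assms(2)[of x y] by linarith
  qed
  then show ?thesis
    unfolding lip_poly_def by blast
qed

lemma prefix_lipschitz_imp_vnorm_lipschitz:
  assumes "prefix_lipschitz N f"
  obtains L where "0 \<le> L" "\<And>x y. \<bar>f x - f y\<bar> \<le> L * vnorm {..<N} (\<lambda>i. x i - y i)"
proof -
  obtain L where "0 \<le> L" and L: "\<And>z z'. \<bar>f z - f z'\<bar> \<le> L * (\<Sum>m<N. \<bar>z m - z' m\<bar>)"
    using assms unfolding prefix_lipschitz_def by blast
  have "\<bar>f x - f y\<bar> \<le> L * real N * vnorm {..<N} (\<lambda>i. x i - y i)" for x y
    using L[of x y] mult_left_mono[OF sum_abs_le_vnorm[of "\<lambda>i. x i - y i" N] \<open>0 \<le> L\<close>]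
    by (simp add: mult.assoc)
  with \<open>0 \<le> L\<close> show ?thesis
    using that[of "L * real N"] by simp
qed

lemma prefix_lipschitz_imp_lip_poly: "prefix_lipschitz N f \<Longrightarrow> lip_poly {..<N} f"
  by (metis lipschitz_imp_lip_poly prefix_lipschitz_imp_vnorm_lipschitz)

lemma prefix_lipschitz_imp_bdd_lip:
  assumes "prefix_lipschitz N f" "\<And>z. \<bar>f z\<bar> \<le> C"
  shows "bdd_lip {..<N} f"
  using assms prefix_lipschitz_imp_vnorm_lipschitz unfolding bdd_lip_def by metis

lemma abs_add_mult_diff_le:
  fixes a b c a' b' c' :: real
  shows "\<bar>(a + b * c) - (a' + b' * c')\<bar> \<le> \<bar>a - a'\<bar> + \<bar>b\<bar> * \<bar>c - c'\<bar> + \<bar>c'\<bar> * \<bar>b - b'\<bar>"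
proof -
  have "(a + b * c) - (a' + b' * c') = (a - a') + b * (c - c') + c' * (b - b')"
    by (simp add: algebra_simps)
  also have "\<bar>\<dots>\<bar> \<le> \<bar>a - a'\<bar> + \<bar>b * (c - c')\<bar> + \<bar>c' * (b - b')\<bar>"
    by (rule order_trans[OF abs_triangle_ineq add_mono[OF abs_triangle_ineq order_refl]])
  finally show ?thesis
    by (simp add: abs_mult)
qed

lemma linear_le_sqrt_sum_squares:
  fixes \<alpha> \<beta> u v :: real
  assumes "0 \<le> \<alpha>" "0 \<le> \<beta>"
  shows "\<alpha> * u + \<beta> * v \<le> (\<alpha> + \<beta>) * sqrt (u\<^sup>2 + v\<^sup>2)"
  using mult_left_mono[OF real_sqrt_sum_squares_ge1[of u v] assms(1)]
    mult_left_mono[OF real_sqrt_sum_squares_ge2[of v u] assms(2)]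
  by (simp add: distrib_right)

lemma bdd_lipE:
  assumes "bdd_lip I f"
  obtains C L where "0 \<le> C" "0 \<le> L" "\<And>x. \<bar>f x\<bar> \<le> C"
    "\<And>x x'. \<bar>f x - f x'\<bar> \<le> L * vnorm I (\<lambda>i. x i - x' i)"
proof -
  obtain C L where C: "\<And>x. \<bar>f x\<bar> \<le> C" and L: "\<And>x x'. \<bar>f x - f x'\<bar> \<le> L * vnorm I (\<lambda>i. x i - x' i)"
    using assms unfolding bdd_lip_def by blast
  have "\<bar>f x - f x'\<bar> \<le> \<bar>L\<bar> * vnorm I (\<lambda>i. x i - x' i)" for x x'
    using L[of x x'] mult_right_mono[OF abs_ge_self vnorm_nonneg, of L I "\<lambda>i. x i - x' i"] by linarith
  moreover have "0 \<le> C"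
    using C by (meson abs_ge_zero order_trans)
  ultimately show ?thesis
    using that[of C "\<bar>L\<bar>"] C by auto
qed

lemma bdd_lip2_affine:
  assumes "bdd_lip I f" "bdd_lip I g" "bdd_lip J h"
  shows "bdd_lip2 I J (\<lambda>x y. f x + g x * h y)"
proof -
  obtain Cf Lf where "0 \<le> Cf" "0 \<le> Lf" and Cf: "\<And>x. \<bar>f x\<bar> \<le> Cf"
    and Lf: "\<And>x x'. \<bar>f x - f x'\<bar> \<le> Lf * vnorm I (\<lambda>i. x i - x' i)"
    using assms(1) by (rule bdd_lipE) blast
  obtain Cg Lg where "0 \<le> Cg" "0 \<le> Lg" and Cg: "\<And>x. \<bar>g x\<bar> \<le> Cg"
    and Lg: "\<And>x x'. \<bar>g x - g x'\<bar> \<le> Lg * vnorm I (\<lambda>i. x i - x' i)"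
    using assms(2) by (rule bdd_lipE) blast
  obtain Ch Lh where "0 \<le> Ch" "0 \<le> Lh" and Ch: "\<And>y. \<bar>h y\<bar> \<le> Ch"
    and Lh: "\<And>y y'. \<bar>h y - h y'\<bar> \<le> Lh * vnorm J (\<lambda>j. y j - y' j)"
    using assms(3) by (rule bdd_lipE) blast
  have "\<bar>f x + g x * h y - (f x' + g x' * h y')\<bar> \<le> (Lf + Cg * Lh + Ch * Lg) *
      sqrt ((vnorm I (\<lambda>i. x i - x' i))\<^sup>2 + (vnorm J (\<lambda>j. y j - y' j))\<^sup>2)" for x y x' y'
  proof -
    define u v where "u = vnorm I (\<lambda>i. x i - x' i)" and "v = vnorm J (\<lambda>j. y j - y' j)"
    have "\<bar>f x + g x * h y - (f x' + g x' * h y')\<bar>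
        \<le> \<bar>f x - f x'\<bar> + \<bar>g x\<bar> * \<bar>h y - h y'\<bar> + \<bar>h y'\<bar> * \<bar>g x - g x'\<bar>"
      by (rule abs_add_mult_diff_le)
    also have "\<dots> \<le> Lf * u + Cg * (Lh * v) + Ch * (Lg * u)"
      unfolding u_def v_def using Cf Cg Ch Lf Lg Lh \<open>0 \<le> Cg\<close> \<open>0 \<le> Ch\<close>
      by (intro add_mono mult_mono) auto
    also have "\<dots> = (Lf + Ch * Lg) * u + (Cg * Lh) * v"
      by (simp add: algebra_simps)
    also have "\<dots> \<le> (Lf + Ch * Lg + Cg * Lh) * sqrt (u\<^sup>2 + v\<^sup>2)"
      using \<open>0 \<le> Lf\<close> \<open>0 \<le> Cg\<close> \<open>0 \<le> Lh\<close> \<open>0 \<le> Ch\<close> \<open>0 \<le> Lg\<close>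
      by (intro linear_le_sqrt_sum_squares) auto
    finally show ?thesis
      unfolding u_def v_def by (simp add: algebra_simps)
  qed
  moreover have "\<bar>f x + g x * h y\<bar> \<le> Cf + Cg * Ch" for x y
  proof -
    have "\<bar>g x\<bar> * \<bar>h y\<bar> \<le> Cg * Ch"
      using Cg Ch \<open>0 \<le> Cg\<close> by (intro mult_mono) auto
    then show ?thesis
      using Cf[of x] abs_triangle_ineq[of "f x" "g x * h y"] by (simp add: abs_mult)
  qed
  ultimately show ?thesis
    unfolding bdd_lip2_def by blast
qed

section \<open>Sub-linear expectations and capacities\<close>

locale sublinear_capacity_space =
  fixes H :: "('a \<Rightarrow> real) set" and E :: "('a \<Rightarrow> real) \<Rightarrow> real"
    and Ps :: "'a measure set" and F :: "'a set set" and V :: "'a set \<Rightarrow> real"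
  assumes sublinear: "sublinear_expectation_space H E"
    and CC: "condition_CC H E Ps"
    and sigma_algebra_F: "sigma_algebra UNIV F"
    and capacity: "subadd_capacity F V"
    and capacity_between: "capacity_between H E F V"
begin

lemma
  shows H_add: "X \<in> H \<Longrightarrow> Y \<in> H \<Longrightarrow> (\<lambda>\<omega>. X \<omega> + Y \<omega>) \<in> H"
    and H_scale: "X \<in> H \<Longrightarrow> (\<lambda>\<omega>. c * X \<omega>) \<in> H"
    and E_mono: "X \<in> H \<Longrightarrow> Y \<in> H \<Longrightarrow> (\<And>\<omega>. X \<omega> \<le> Y \<omega>) \<Longrightarrow> E X \<le> E Y"
    and E_const [simp]: "E (\<lambda>_. c) = c"
    and E_subadd: "X \<in> H \<Longrightarrow> Y \<in> H \<Longrightarrow> E (\<lambda>\<omega>. X \<omega> + Y \<omega>) \<le> E X + E Y"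
    and E_pos_homogeneous: "X \<in> H \<Longrightarrow> 0 \<le> a \<Longrightarrow> E (\<lambda>\<omega>. a * X \<omega>) = a * E X"
  using sublinear unfolding sublinear_expectation_space_def by simp_all

lemma H_comp:
  fixes n :: nat
  assumes "\<And>i. i < n \<Longrightarrow> Z i \<in> H" "lip_poly {..<n} \<phi>"
  shows "(\<lambda>\<omega>. \<phi> (\<lambda>i. Z i \<omega>)) \<in> H"
  using sublinear[unfolded sublinear_expectation_space_def, THEN conjunct2, THEN conjunct2,
      THEN conjunct1, rule_format, of n Z \<phi>] assms
  by blast

lemma H_const: "(\<lambda>_. c) \<in> H"
  using H_comp[OF _ prefix_lipschitz_imp_lip_poly[OF prefix_lipschitz_const], of 0 "\<lambda>_ _. 0"] by simp

lemma E_add_const: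
  assumes "X \<in> H"
  shows "E (\<lambda>\<omega>. X \<omega> + c) = E X + c"
proof -
  have "(\<lambda>\<omega>. X \<omega> + c) \<in> H"
    using assms by (rule H_add[OF _ H_const])
  from E_subadd[OF this H_const, of "- c"] E_subadd[OF assms H_const, of c] show ?thesis
    by simp
qed

lemma E_affine: "X \<in> H \<Longrightarrow> 0 \<le> t \<Longrightarrow> E (\<lambda>\<omega>. a + t * X \<omega>) = a + t * E X"
  using E_add_const[OF H_scale, of X t a] E_pos_homogeneous[of X t] by (simp add: add.commute)

lemma E_bounds: "X \<in> H \<Longrightarrow> (\<And>\<omega>. lo \<le> X \<omega> \<and> X \<omega> \<le> hi) \<Longrightarrow> lo \<le> E X \<and> E X \<le> hi"
  using E_mono[OF H_const, of X lo] E_mono[OF _ H_const, of X hi] by auto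

lemma Ps_measure: "P \<in> Ps \<Longrightarrow> prob_space P \<and> space P = UNIV \<and> sets P = sigma_H H"
  using CC[unfolded condition_CC_def, THEN conjunct1] by blast

lemma prob_space_Ps: "P \<in> Ps \<Longrightarrow> prob_space P"
  and space_Ps: "P \<in> Ps \<Longrightarrow> space P = UNIV"
  by (simp_all add: Ps_measure)

lemma measurable_H:
  assumes "X \<in> H" "P \<in> Ps"
  shows "X \<in> borel_measurable P"
proof (rule measurableI)
  fix A :: "real set"
  assume "A \<in> sets borel"
  with assms(1) have "X -` A \<in> sigma_H H"
    unfolding sigma_H_def by (intro sigma_sets.Basic) blast
  then show "X -` A \<inter> space P \<in> sets P"
    using Ps_measure[OF assms(2)] by simp
qed simp

lemma integrable_H:
  assumes "X \<in> H" "\<And>\<omega>. \<bar>X \<omega>\<bar> \<le> B" "P \<in> Ps"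
  shows "integrable P X"
proof -
  interpret prob_space P
    using assms(3) by (rule prob_space_Ps)
  show ?thesis
    using assms measurable_H by (intro integrable_const_bound[where B = B]) auto
qed

lemma E_eq_SUP:
  assumes "X \<in> H" "\<And>\<omega>. \<bar>X \<omega>\<bar> \<le> B"
  shows "E X = (SUP P\<in>Ps. integral\<^sup>L P X)"
proof -
  from assms(2) have "bounded (range X)"
    unfolding bounded_iff by auto
  with assms(1) show ?thesis
    using CC[unfolded condition_CC_def, THEN conjunct2, THEN conjunct1] by blast
qed

text \<open>If \<open>Ps\<close> were empty, \<open>E\<close> would map all bounded elements of \<open>H\<close> to the junk value \<open>Sup {}\<close>.\<close>
lemma Ps_nonempty: "Ps \<noteq> {}"
  using E_eq_SUP[OF H_const, of 0 0] E_eq_SUP[OF H_const, of 1 1] by auto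

lemma exists_P_integral_gt:
  assumes "X \<in> H" "\<And>\<omega>. \<bar>X \<omega>\<bar> \<le> B" "0 < e"
  shows "\<exists>P\<in>Ps. E X - e < integral\<^sup>L P X"
proof -
  have "integral\<^sup>L P X \<le> B" if "P \<in> Ps" for P
  proof -
    interpret prob_space P
      using that by (rule prob_space_Ps)
    have "integral\<^sup>L P X \<le> integral\<^sup>L P (\<lambda>_. B)"
      using assms(2) integrable_H[OF assms(1,2) that] by (intro integral_mono) (auto simp: abs_le_iff)
    then show ?thesis
      by (simp add: prob_space)
  qed
  then have "bdd_above ((\<lambda>P. integral\<^sup>L P X) ` Ps)"
    by (auto intro!: bdd_aboveI[where M = B])
  moreover have "E X - e < (SUP P\<in>Ps. integral\<^sup>L P X)"
    using E_eq_SUP[OF assms(1,2)] assms(3) by simp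
  ultimately show ?thesis
    using less_cSUP_iff[OF Ps_nonempty] by blast
qed

lemma V_le_E:
  assumes "A \<in> F" "g \<in> H" "\<And>\<omega>. indicator A \<omega> \<le> g \<omega>"
  shows "V A \<le> E g"
proof -
  have "\<forall>\<omega>. 0 \<le> (indicator A \<omega> :: real) \<and> indicator A \<omega> \<le> g \<omega>"
    using assms(3) by simp
  then show ?thesis
    using capacity_between[unfolded capacity_between_def, rule_format, OF assms(1) H_const[of 0] assms(2)]
    by blast
qed

lemma V_bounds: "A \<in> F \<Longrightarrow> 0 \<le> V A \<and> V A \<le> 1"
  using capacity unfolding subadd_capacity_def by auto

lemma Compl_in_F:
  assumes "A \<in> F"
  shows "- A \<in> F"
proof -
  have "UNIV - A \<in> F"
    using sigma_algebra_F assms by (simp add: sigma_algebra_iff2)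
  then show ?thesis
    by (simp add: Compl_eq_Diff_UNIV)
qed

end

section \<open>Block products of an independent sequence\<close>

definition block_miss_sum :: "(nat \<Rightarrow> nat) \<Rightarrow> (nat \<Rightarrow> real) \<Rightarrow> nat \<Rightarrow> real" where
  "block_miss_sum a p L = (\<Sum>l<L. \<Prod>m\<in>{a l..<a (Suc l)}. 1 - p m)"

lemma block_miss_sum_Suc:
  "block_miss_sum a p (Suc L) = block_miss_sum a p L + (\<Prod>m\<in>{a L..<a (Suc L)}. 1 - p m)"
  by (simp add: block_miss_sum_def)

lemma block_miss_sum_bounds:
  assumes "\<And>m. 0 \<le> p m \<and> p m \<le> 1"
  shows "0 \<le> block_miss_sum a p L \<and> block_miss_sum a p L \<le> real L"
proof -
  have prod: "0 \<le> (\<Prod>m\<in>S. 1 - p m) \<and> (\<Prod>m\<in>S. 1 - p m) \<le> 1" for S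
    using assms by (auto intro: prod_nonneg prod_le_1)
  have "(\<Sum>l<L. \<Prod>m\<in>{a l..<a (Suc l)}. 1 - p m) \<le> (\<Sum>l<L. 1)"
    using prod by (intro sum_mono) blast
  moreover have "0 \<le> (\<Sum>l<L. \<Prod>m\<in>{a l..<a (Suc l)}. 1 - p m)"
    using prod by (intro sum_nonneg) blast
  ultimately show ?thesis
    unfolding block_miss_sum_def by simp
qed

lemma block_miss_sum_mono:
  assumes "\<And>m. p m \<le> q m \<and> q m \<le> 1" "L \<le> L'"
  shows "block_miss_sum a q L \<le> block_miss_sum a p L'"
proof -
  have "(\<Sum>l<L. \<Prod>m\<in>{a l..<a (Suc l)}. 1 - q m) \<le> (\<Sum>l<L. \<Prod>m\<in>{a l..<a (Suc l)}. 1 - p m)"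
    using assms(1) by (intro sum_mono prod_mono) (auto simp: algebra_simps)
  also have "\<dots> \<le> (\<Sum>l<L'. \<Prod>m\<in>{a l..<a (Suc l)}. 1 - p m)"
    using assms by (intro sum_mono2 prod_nonneg) (auto intro: order_trans)
  finally show ?thesis
    unfolding block_miss_sum_def .
qed

lemma prefix_lipschitz_block_miss_sum:
  assumes "strict_mono a" "a L \<le> N"
  shows "prefix_lipschitz N (\<lambda>z. block_miss_sum a (\<lambda>m. ramp k (z m)) L)"
proof -
  have "m < N" if "l < L" "m < a (Suc l)" for l m
    using that assms strict_mono_less_eq[OF assms(1), of "Suc l" L] by simp
  then have "prefix_lipschitz N (\<lambda>z. \<Sum>l<L. \<Prod>m\<in>{a l..<a (Suc l)}. 1 - ramp k (z m))"
    using ramp_bounds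
    by (intro prefix_lipschitz_sum prefix_lipschitz_prod prefix_lipschitz_diff prefix_lipschitz_const
        prefix_lipschitz_ramp) auto
  then show ?thesis
    unfolding block_miss_sum_def .
qed

lemma bdd_lip_block_miss_sum:
  assumes "strict_mono a"
  shows "bdd_lip {..<a L} (\<lambda>z. block_miss_sum a (\<lambda>m. ramp k (z m)) L)"
proof (rule prefix_lipschitz_imp_bdd_lip[OF prefix_lipschitz_block_miss_sum[OF assms order_refl]])
  show "\<bar>block_miss_sum a (\<lambda>m. ramp k (z m)) L\<bar> \<le> real L" for z
    using block_miss_sum_bounds[of "\<lambda>m. ramp k (z m)" a L] ramp_bounds by auto
qed

locale indep_transform = sublinear_capacity_space H E Ps F V
  for H :: "('a \<Rightarrow> real) set" and E Ps F V +
  fixes d :: "nat \<Rightarrow> nat" and X :: "nat \<Rightarrow> 'a \<Rightarrow> nat \<Rightarrow> real"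
    and \<delta> :: "nat \<Rightarrow> (nat \<Rightarrow> real) \<Rightarrow> real" and K :: real
  assumes indep: "indep_seq_vec H E d X"
    and \<delta>_bounds: "\<And>n y. 0 \<le> \<delta> n y \<and> \<delta> n y \<le> 1"
    and \<delta>_lipschitz: "\<And>n y y'. \<bar>\<delta> n y - \<delta> n y'\<bar> \<le> K * vnorm {..<d n} (\<lambda>i. y i - y' i)"
    and K_nonneg: "0 \<le> K"
begin

definition Y :: "nat \<Rightarrow> 'a \<Rightarrow> real" where
  "Y n \<omega> = \<delta> n (X n \<omega>)"

text \<open>As in \<open>indep_seq_vec\<close>, the past \<open>(X 0, \<dots>, X (N - 1))\<close> is a vector indexed by the pairs
  \<open>(m, i)\<close> with \<open>m < N\<close> and \<open>i < d m\<close>.\<close>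

definition past :: "nat \<Rightarrow> (nat \<times> nat \<Rightarrow> real) \<Rightarrow> nat \<Rightarrow> real" where
  "past N x m = (if m < N then \<delta> m (\<lambda>i. x (m, i)) else 0)"

definition block_missed :: "(nat \<Rightarrow> nat) \<Rightarrow> nat \<Rightarrow> 'a set" where
  "block_missed a l = {\<omega>. \<forall>m\<in>{a l..<a (Suc l)}. Y m \<omega> \<noteq> 0}"

lemma Y_bounds: "0 \<le> Y n \<omega> \<and> Y n \<omega> \<le> 1"
  by (simp add: Y_def \<delta>_bounds)

lemma Y_in_H: "Y n \<in> H"
proof -
  have "(\<lambda>\<omega>. X n \<omega> i) \<in> H" if "i < d n" for i
    using indep that unfolding indep_seq_vec_def random_vec_def by blast
  moreover have "lip_poly {..<d n} (\<delta> n)"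
    using K_nonneg \<delta>_lipschitz by (rule lipschitz_imp_lip_poly)
  ultimately show ?thesis
    using H_comp[of "d n" "\<lambda>i \<omega>. X n \<omega> i" "\<delta> n"] by (simp add: Y_def[abs_def])
qed

lemma prefix_lipschitz_Y_in_H: "prefix_lipschitz N \<psi> \<Longrightarrow> (\<lambda>\<omega>. \<psi> (\<lambda>m. Y m \<omega>)) \<in> H"
  by (rule H_comp[OF Y_in_H prefix_lipschitz_imp_lip_poly])

lemma measurable_Y: "P \<in> Ps \<Longrightarrow> Y n \<in> borel_measurable P"
  by (rule measurable_H[OF Y_in_H])

lemma ramp_Y_in_H: "(\<lambda>\<omega>. ramp k (Y n \<omega>)) \<in> H"
  using prefix_lipschitz_Y_in_H[OF prefix_lipschitz_ramp[of n "Suc n" k]] by simp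

lemma E_ramp_Y_bounds: "0 \<le> E (\<lambda>\<omega>. ramp k (Y n \<omega>)) \<and> E (\<lambda>\<omega>. ramp k (Y n \<omega>)) \<le> 1"
  using E_bounds[OF ramp_Y_in_H] ramp_bounds by blast

lemma block_miss_sum_Y_in_H:
  "strict_mono a \<Longrightarrow> (\<lambda>\<omega>. block_miss_sum a (\<lambda>m. ramp k (Y m \<omega>)) L) \<in> H"
  using prefix_lipschitz_Y_in_H[OF prefix_lipschitz_block_miss_sum[OF _ order_refl]] .

lemma integrable_block_miss_sum_Y:
  "strict_mono a \<Longrightarrow> P \<in> Ps \<Longrightarrow> integrable P (\<lambda>\<omega>. block_miss_sum a (\<lambda>m. ramp k (Y m \<omega>)) L)"
  using integrable_H[OF block_miss_sum_Y_in_H, of a k L "real L"] block_miss_sum_bounds ramp_bounds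
  by (simp add: abs_le_iff)

lemma bdd_lip_past:
  assumes "prefix_lipschitz N \<psi>" "\<And>z. \<bar>\<psi> z\<bar> \<le> A"
  shows "bdd_lip {(m, i). m < N \<and> i < d m} (\<lambda>x. \<psi> (past N x))"
proof -
  let ?I = "{(m, i). m < N \<and> i < d m}"
  obtain L where "0 \<le> L" and L: "\<And>z z'. \<bar>\<psi> z - \<psi> z'\<bar> \<le> L * (\<Sum>m<N. \<bar>z m - z' m\<bar>)"
    using assms(1) unfolding prefix_lipschitz_def by blast
  have "\<bar>\<psi> (past N x) - \<psi> (past N x')\<bar> \<le> L * (real N * K) * vnorm ?I (\<lambda>p. x p - x' p)" for x x'
  proof -
    have "\<bar>past N x m - past N x' m\<bar> \<le> K * vnorm ?I (\<lambda>p. x p - x' p)" if "m < N" for m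
      using that \<delta>_lipschitz[of m] K_nonneg vnorm_block_le[OF that, of d "\<lambda>p. x p - x' p"]
      by (simp add: past_def) (meson mult_left_mono order_trans)
    then have "(\<Sum>m<N. \<bar>past N x m - past N x' m\<bar>) \<le> real N * K * vnorm ?I (\<lambda>p. x p - x' p)"
      using sum_mono[of "{..<N}" "\<lambda>m. \<bar>past N x m - past N x' m\<bar>" "\<lambda>_. K * vnorm ?I (\<lambda>p. x p - x' p)"]
      by simp
    with L[of "past N x" "past N x'"] \<open>0 \<le> L\<close> show ?thesis
      by (smt (verit, ccfv_SIG) mult.assoc mult_left_mono)
  qed
  with assms(2) show ?thesis
    unfolding bdd_lip_def by blast
qed

lemma bdd_lip_ramp_\<delta>: "bdd_lip {..<d n} (\<lambda>y. ramp k (\<delta> n y))"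
proof -
  have "\<bar>ramp k (\<delta> n y) - ramp k (\<delta> n y')\<bar> \<le> real k * K * vnorm {..<d n} (\<lambda>i. y i - y' i)" for y y'
    using ramp_lipschitz[of k "\<delta> n y" "\<delta> n y'"] mult_left_mono[OF \<delta>_lipschitz[of n y y'], of "real k"]
    by (simp add: mult.assoc)
  moreover have "\<bar>ramp k t\<bar> \<le> 1" for t
    using ramp_bounds[of k t] by simp
  ultimately show ?thesis
    unfolding bdd_lip_def by blast
qed

lemma E_indep_ramp_next:
  assumes "prefix_lipschitz N \<alpha>" "prefix_lipschitz N \<beta>"
    and "\<And>z. \<bar>\<alpha> z\<bar> \<le> A" "\<And>z. \<bar>\<beta> z\<bar> \<le> B" "\<And>z. 0 \<le> \<beta> z"
  shows "E (\<lambda>\<omega>. \<alpha> (\<lambda>m. Y m \<omega>) + \<beta> (\<lambda>m. Y m \<omega>) * ramp k (Y N \<omega>))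
       = E (\<lambda>\<omega>. \<alpha> (\<lambda>m. Y m \<omega>) + \<beta> (\<lambda>m. Y m \<omega>) * E (\<lambda>\<omega>'. ramp k (Y N \<omega>')))"
proof -
  define \<phi> where "\<phi> x y = \<alpha> (past N x) + \<beta> (past N x) * ramp k (\<delta> N y)" for x y
  have "indep_vec E {(m, i). m < N \<and> i < d m} (\<lambda>\<omega> (m, i). X m \<omega> i) {..<d N} (X N)"
    using indep unfolding indep_seq_vec_def by blast
  moreover have "bdd_lip2 {(m, i). m < N \<and> i < d m} {..<d N} \<phi>"
    unfolding \<phi>_def[abs_def]
    using bdd_lip2_affine[OF bdd_lip_past[OF assms(1,3)] bdd_lip_past[OF assms(2,4)] bdd_lip_ramp_\<delta>] .
  ultimately have indep_eq: "E (\<lambda>\<omega>. \<phi> (\<lambda>(m, i). X m \<omega> i) (X N \<omega>))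
      = E (\<lambda>\<omega>. E (\<lambda>\<omega>'. \<phi> (\<lambda>(m, i). X m \<omega> i) (X N \<omega>')))"
    unfolding indep_vec_def by blast
  have "past N (\<lambda>(m, i). X m \<omega> i) m = Y m \<omega>" if "m < N" for m \<omega>
    using that by (simp add: past_def Y_def)
  then have "\<phi> (\<lambda>(m, i). X m \<omega> i) (X N \<omega>') = \<alpha> (\<lambda>m. Y m \<omega>) + \<beta> (\<lambda>m. Y m \<omega>) * ramp k (Y N \<omega>')"
    for \<omega> \<omega>'
    unfolding \<phi>_def Y_def[of N]
    using prefix_lipschitz_cong[OF assms(1)] prefix_lipschitz_cong[OF assms(2)] by metis
  with indep_eq show ?thesis
    using E_affine[OF ramp_Y_in_H assms(5)] by simp
qed

text \<open>\<open>1 - R (1 - c) = (1 - R) + R c\<close> is affine in the new factor \<open>c\<close> with a nonnegative slope, so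
  independence lets \<open>c\<close> be replaced by its sub-linear expectation.\<close>

lemma E_peel_last_factor:
  fixes k :: nat
  assumes "prefix_lipschitz N Q" "prefix_lipschitz N R"
    and "\<And>z. 0 \<le> Q z \<and> Q z \<le> C" "\<And>z. 0 \<le> R z \<and> R z \<le> 1" "0 \<le> t" "t \<le> 1"
  defines "e \<equiv> E (\<lambda>\<omega>. ramp k (Y N \<omega>))"
  shows "E (\<lambda>\<omega>. Q (\<lambda>m. Y m \<omega>) + t * (1 - R (\<lambda>m. Y m \<omega>) * (1 - ramp k (Y N \<omega>))))
       = E (\<lambda>\<omega>. Q (\<lambda>m. Y m \<omega>) + t * (1 - e) * (1 - R (\<lambda>m. Y m \<omega>))) + t * e"
proof -
  have "E (\<lambda>\<omega>. Q (\<lambda>m. Y m \<omega>) + t * (1 - R (\<lambda>m. Y m \<omega>) * (1 - ramp k (Y N \<omega>))))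
      = E (\<lambda>\<omega>. (Q (\<lambda>m. Y m \<omega>) + t * (1 - R (\<lambda>m. Y m \<omega>))) + t * R (\<lambda>m. Y m \<omega>) * ramp k (Y N \<omega>))"
    by (simp add: algebra_simps)
  also have "\<dots> = E (\<lambda>\<omega>. (Q (\<lambda>m. Y m \<omega>) + t * (1 - R (\<lambda>m. Y m \<omega>))) + t * R (\<lambda>m. Y m \<omega>) * e)"
    unfolding e_def
  proof (rule E_indep_ramp_next)
    show "prefix_lipschitz N (\<lambda>z. Q z + t * (1 - R z))"
      using assms(1,2)
      by (intro prefix_lipschitz_add prefix_lipschitz_cmult prefix_lipschitz_diff prefix_lipschitz_const)
    show "prefix_lipschitz N (\<lambda>z. t * R z)"
      using assms(2) by (rule prefix_lipschitz_cmult)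
    fix z
    have "0 \<le> t * (1 - R z)" "t * (1 - R z) \<le> 1" "0 \<le> t * R z" "t * R z \<le> 1"
      using assms(4)[of z] assms(5,6) by (auto intro: mult_le_one)
    then show "\<bar>Q z + t * (1 - R z)\<bar> \<le> C + 1" "\<bar>t * R z\<bar> \<le> 1" "0 \<le> t * R z"
      using assms(3)[of z] by auto
  qed
  also have "\<dots> = E (\<lambda>\<omega>. (Q (\<lambda>m. Y m \<omega>) + t * (1 - e) * (1 - R (\<lambda>m. Y m \<omega>))) + t * e)"
    by (simp add: algebra_simps)
  also have "\<dots> = E (\<lambda>\<omega>. Q (\<lambda>m. Y m \<omega>) + t * (1 - e) * (1 - R (\<lambda>m. Y m \<omega>))) + t * e"
    using assms(1,2)
    by (intro E_add_const prefix_lipschitz_Y_in_H prefix_lipschitz_add prefix_lipschitz_cmult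
        prefix_lipschitz_diff prefix_lipschitz_const)
  finally show ?thesis .
qed

lemma E_partial_block_miss:
  fixes a :: "nat \<Rightarrow> nat" and k :: nat
  defines "e \<equiv> \<lambda>m. E (\<lambda>\<omega>. ramp k (Y m \<omega>))"
  assumes a: "strict_mono a"
    and blocks: "E (\<lambda>\<omega>. real L - block_miss_sum a (\<lambda>m. ramp k (Y m \<omega>)) L) = real L - block_miss_sum a e L"
    and t: "0 \<le> t" "t \<le> 1"
  shows "E (\<lambda>\<omega>. real L - block_miss_sum a (\<lambda>m. ramp k (Y m \<omega>)) L
            + t * (1 - (\<Prod>m\<in>{a L..<a L + p}. 1 - ramp k (Y m \<omega>))))
       = real L - block_miss_sum a e L + t * (1 - (\<Prod>m\<in>{a L..<a L + p}. 1 - e m))"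
  using t
proof (induction p arbitrary: t)
  case 0
  then show ?case
    using blocks by simp
next
  case (Suc p)
  define N where "N = a L + p"
  define Q where "Q z = real L - block_miss_sum a (\<lambda>m. ramp k (z m)) L" for z
  define R where "R z = (\<Prod>m\<in>{a L..<N}. 1 - ramp k (z m))" for z
  have prod_Suc: "(\<Prod>m\<in>{a L..<a L + Suc p}. g m) = (\<Prod>m\<in>{a L..<N}. g m) * g N" for g :: "nat \<Rightarrow> real"
    unfolding N_def by (simp add: prod.atLeastLessThan_Suc)
  have Q_lip: "prefix_lipschitz N Q" and R_lip: "prefix_lipschitz N R"
    unfolding Q_def[abs_def] R_def[abs_def] N_def using a ramp_bounds
    by (auto intro!: prefix_lipschitz_diff prefix_lipschitz_const prefix_lipschitz_block_miss_sum
        prefix_lipschitz_prod prefix_lipschitz_ramp)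
  have R_bounds: "0 \<le> R z \<and> R z \<le> 1" for z
    unfolding R_def using ramp_bounds by (auto intro: prod_nonneg prod_le_1)
  have Q_bounds: "0 \<le> Q z \<and> Q z \<le> real L" for z
    unfolding Q_def using block_miss_sum_bounds[of "\<lambda>m. ramp k (z m)" a L] ramp_bounds by auto
  have "0 \<le> e N \<and> e N \<le> 1"
    unfolding e_def by (rule E_ramp_Y_bounds)
  then have t': "0 \<le> t * (1 - e N)" "t * (1 - e N) \<le> 1"
    using Suc.prems by (auto intro: mult_le_one)
  have "E (\<lambda>\<omega>. Q (\<lambda>m. Y m \<omega>) + t * (1 - (\<Prod>m\<in>{a L..<a L + Suc p}. 1 - ramp k (Y m \<omega>))))
      = E (\<lambda>\<omega>. Q (\<lambda>m. Y m \<omega>) + t * (1 - e N) * (1 - R (\<lambda>m. Y m \<omega>))) + t * e N"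
    unfolding prod_Suc R_def[symmetric] e_def
    using E_peel_last_factor[OF Q_lip R_lip Q_bounds R_bounds Suc.prems] .
  also have "\<dots> = real L - block_miss_sum a e L + t * (1 - e N) * (1 - (\<Prod>m\<in>{a L..<N}. 1 - e m)) + t * e N"
    using Suc.IH[OF t'] unfolding Q_def R_def N_def by (simp add: mult.assoc)
  also have "\<dots> = real L - block_miss_sum a e L + t * (1 - (\<Prod>m\<in>{a L..<a L + Suc p}. 1 - e m))"
    unfolding prod_Suc by (simp add: algebra_simps)
  finally show ?case
    unfolding Q_def .
qed

lemma E_block_miss_sum:
  assumes "strict_mono a"
  shows "E (\<lambda>\<omega>. real L - block_miss_sum a (\<lambda>m. ramp k (Y m \<omega>)) L)
       = real L - block_miss_sum a (\<lambda>m. E (\<lambda>\<omega>. ramp k (Y m \<omega>))) L"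
proof (induction L)
  case (Suc L)
  have "a L \<le> a (Suc L)"
    using assms by (simp add: strict_mono_less_eq)
  then have a_Suc: "a L + (a (Suc L) - a L) = a (Suc L)"
    by simp
  have "E (\<lambda>\<omega>. real (Suc L) - block_miss_sum a (\<lambda>m. ramp k (Y m \<omega>)) (Suc L))
      = E (\<lambda>\<omega>. real L - block_miss_sum a (\<lambda>m. ramp k (Y m \<omega>)) L
            + 1 * (1 - (\<Prod>m\<in>{a L..<a L + (a (Suc L) - a L)}. 1 - ramp k (Y m \<omega>))))"
    unfolding a_Suc block_miss_sum_Suc by (simp add: algebra_simps)
  also have "\<dots> = real L - block_miss_sum a (\<lambda>m. E (\<lambda>\<omega>. ramp k (Y m \<omega>))) L
      + 1 * (1 - (\<Prod>m\<in>{a L..<a L + (a (Suc L) - a L)}. 1 - E (\<lambda>\<omega>. ramp k (Y m \<omega>))))"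
    by (rule E_partial_block_miss[OF assms Suc.IH]) simp_all
  also have "\<dots> = real (Suc L) - block_miss_sum a (\<lambda>m. E (\<lambda>\<omega>. ramp k (Y m \<omega>))) (Suc L)"
    unfolding a_Suc block_miss_sum_Suc by simp
  finally show ?case .
qed (simp add: block_miss_sum_def)

lemma integral_block_miss_sum_mono:
  assumes "strict_mono a" "P \<in> Ps" "k \<le> k'" "L \<le> L'"
  shows "(\<integral>\<omega>. block_miss_sum a (\<lambda>m. ramp k (Y m \<omega>)) L \<partial>P)
       \<le> (\<integral>\<omega>. block_miss_sum a (\<lambda>m. ramp k' (Y m \<omega>)) L' \<partial>P)"
proof (intro integral_mono integrable_block_miss_sum_Y[OF assms(1,2)])
  show "block_miss_sum a (\<lambda>m. ramp k (Y m \<omega>)) L \<le> block_miss_sum a (\<lambda>m. ramp k' (Y m \<omega>)) L'" for \<omega>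
    using assms(3,4) ramp_antimono ramp_bounds Y_bounds by (intro block_miss_sum_mono) auto
qed

lemma exists_P_block_miss_integral_le:
  assumes a: "strict_mono a"
    and v: "\<And>n k. v n \<le> E (\<lambda>\<omega>. ramp k (Y n \<omega>))"
    and C0: "\<And>L. block_miss_sum a v L \<le> C0"
  shows "\<exists>P\<in>Ps. (\<integral>\<omega>. block_miss_sum a (\<lambda>m. ramp k (Y m \<omega>)) L \<partial>P) \<le> C0 + 1"
proof -
  define Q where "Q \<omega> = real L - block_miss_sum a (\<lambda>m. ramp k (Y m \<omega>)) L" for \<omega>
  have "block_miss_sum a (\<lambda>m. E (\<lambda>\<omega>. ramp k (Y m \<omega>))) L \<le> block_miss_sum a v L"
    using v E_ramp_Y_bounds by (intro block_miss_sum_mono) auto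
  then have EQ: "real L - C0 \<le> E Q"
    unfolding Q_def E_block_miss_sum[OF a] using C0[of L] by linarith
  have Q_H: "Q \<in> H"
    using prefix_lipschitz_Y_in_H[of "a L" "\<lambda>z. real L - block_miss_sum a (\<lambda>m. ramp k (z m)) L"]
      prefix_lipschitz_diff[OF prefix_lipschitz_const prefix_lipschitz_block_miss_sum[OF a order_refl]]
    unfolding Q_def[abs_def] by simp
  have Q_bound: "\<bar>Q \<omega>\<bar> \<le> real L" for \<omega>
    unfolding Q_def using block_miss_sum_bounds[of "\<lambda>m. ramp k (Y m \<omega>)" a L] ramp_bounds by auto
  obtain P where P: "P \<in> Ps" and gt: "E Q - 1 < integral\<^sup>L P Q"
    using exists_P_integral_gt[OF Q_H Q_bound, of 1] by auto
  interpret prob_space P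
    using P by (rule prob_space_Ps)
  have "integral\<^sup>L P Q = real L - (\<integral>\<omega>. block_miss_sum a (\<lambda>m. ramp k (Y m \<omega>)) L \<partial>P)"
    unfolding Q_def using integrable_block_miss_sum_Y[OF a P] by (simp add: prob_space)
  with EQ gt P show ?thesis
    by (intro bexI[OF _ P]) linarith
qed

lemma Y_subseq_integrals_converge:
  fixes Pk :: "nat \<Rightarrow> 'a measure"
  assumes "\<And>k. Pk k \<in> Ps"
  shows "\<exists>r P. strict_mono r \<and> P \<in> Ps \<and> (\<forall>n\<ge>1. \<forall>\<phi>. bdd_lip {..<n} \<phi> \<longrightarrow>
           (\<lambda>j. \<integral>\<omega>. \<phi> (\<lambda>i. Y i \<omega>) \<partial>Pk (r j)) \<longlonglongrightarrow> (\<integral>\<omega>. \<phi> (\<lambda>i. Y i \<omega>) \<partial>P))"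
proof -
  have "Y i \<in> H \<and> bounded (range (Y i))" for i
    using Y_in_H Y_bounds by (auto intro!: boundedI[where B = 1])
  then show ?thesis
    using CC[unfolded condition_CC_def, THEN conjunct2, THEN conjunct2, rule_format, of Y Pk] assms
    by blast
qed

text \<open>The probabilities \<open>Pk k\<close> chosen for \<open>(k, Suc k)\<close> have, by condition (CC), a limit point
  \<open>P\<close>; the integrands are monotone in \<open>k\<close> and \<open>L\<close>, so along the subsequence each fixed
  \<open>(k, L)\<close> is dominated by the diagonal.\<close>

lemma exists_P_block_miss_integrals_le:
  assumes a: "strict_mono a"
    and v: "\<And>n k. v n \<le> E (\<lambda>\<omega>. ramp k (Y n \<omega>))"
    and C0: "\<And>L. block_miss_sum a v L \<le> C0"
  shows "\<exists>P\<in>Ps. \<forall>k L. (\<integral>\<omega>. block_miss_sum a (\<lambda>m. ramp k (Y m \<omega>)) L \<partial>P) \<le> C0 + 1"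
proof -
  have "\<forall>k. \<exists>P. P \<in> Ps \<and> (\<integral>\<omega>. block_miss_sum a (\<lambda>m. ramp k (Y m \<omega>)) (Suc k) \<partial>P) \<le> C0 + 1"
    using exists_P_block_miss_integral_le[OF a v C0] by blast
  then obtain Pk where Pk: "\<And>k. Pk k \<in> Ps"
    "\<And>k. (\<integral>\<omega>. block_miss_sum a (\<lambda>m. ramp k (Y m \<omega>)) (Suc k) \<partial>Pk k) \<le> C0 + 1"
    by metis
  obtain r P where r: "strict_mono r" and P: "P \<in> Ps"
    and conv: "\<forall>n\<ge>1. \<forall>\<phi>. bdd_lip {..<n} \<phi> \<longrightarrow>
       (\<lambda>j. \<integral>\<omega>. \<phi> (\<lambda>i. Y i \<omega>) \<partial>Pk (r j)) \<longlonglongrightarrow> (\<integral>\<omega>. \<phi> (\<lambda>i. Y i \<omega>) \<partial>P)"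
    using Y_subseq_integrals_converge[of Pk, OF Pk(1)] by blast
  have "(\<integral>\<omega>. block_miss_sum a (\<lambda>m. ramp k (Y m \<omega>)) L \<partial>P) \<le> C0 + 1" for k L
  proof (cases "L = 0")
    case True
    then show ?thesis
      using C0[of 0] by (simp add: block_miss_sum_def)
  next
    case False
    then have "1 \<le> a L"
      using seq_suble[OF a, of L] by linarith
    moreover have "(\<integral>\<omega>. block_miss_sum a (\<lambda>m. ramp k (Y m \<omega>)) L \<partial>Pk (r j)) \<le> C0 + 1"
      if "max L k \<le> j" for j
    proof -
      have "k \<le> r j" "L \<le> Suc (r j)"
        using that seq_suble[OF r, of j] by auto
      with Pk(2)[of "r j"] show ?thesis
        using integral_block_miss_sum_mono[OF a Pk(1)] by (meson order_trans)
    qed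
    ultimately show ?thesis
      using bdd_lip_block_miss_sum[OF a]
      by (intro LIMSEQ_le_const2[OF conv[rule_format]]) (auto intro!: exI[of _ "max L k"])
  qed
  with P show ?thesis
    by blast
qed

lemma sets_block_missed:
  assumes "P \<in> Ps"
  shows "block_missed a l \<in> sets P"
proof -
  have [measurable]: "Y m \<in> borel_measurable P" for m
    using measurable_Y[OF assms] .
  have "{\<omega> \<in> space P. \<forall>m\<in>{a l..<a (Suc l)}. Y m \<omega> \<noteq> 0} \<in> sets P"
    by measurable
  then show ?thesis
    by (simp add: block_missed_def space_Ps[OF assms])
qed

lemma block_miss_sum_ramp_Y_tendsto:
  "(\<lambda>k. block_miss_sum a (\<lambda>m. ramp k (Y m \<omega>)) L) \<longlonglongrightarrow> (\<Sum>l<L. indicator (block_missed a l) \<omega>)"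
proof -
  have "(\<Prod>m\<in>{a l..<a (Suc l)}. if Y m \<omega> = 0 then 0 else 1) = (indicator (block_missed a l) \<omega> :: real)" for l
    by (auto simp: block_missed_def indicator_def prod_zero_iff)
  moreover have "(\<lambda>k. \<Sum>l<L. \<Prod>m\<in>{a l..<a (Suc l)}. 1 - ramp k (Y m \<omega>))
      \<longlonglongrightarrow> (\<Sum>l<L. \<Prod>m\<in>{a l..<a (Suc l)}. if Y m \<omega> = 0 then 0 else 1)"
    using Y_bounds by (intro tendsto_sum tendsto_prod one_minus_ramp_tendsto) auto
  ultimately show ?thesis
    unfolding block_miss_sum_def by simp
qed

lemma sum_measure_block_missed_le:
  assumes a: "strict_mono a" and P: "P \<in> Ps"
    and bound: "\<And>k. (\<integral>\<omega>. block_miss_sum a (\<lambda>m. ramp k (Y m \<omega>)) L \<partial>P) \<le> C"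
  shows "(\<Sum>l<L. measure P (block_missed a l)) \<le> C"
proof -
  interpret prob_space P
    using P by (rule prob_space_Ps)
  have B_sets: "block_missed a l \<in> sets P" for l
    using P by (rule sets_block_missed)
  have "(\<lambda>k. \<integral>\<omega>. block_miss_sum a (\<lambda>m. ramp k (Y m \<omega>)) L \<partial>P)
      \<longlonglongrightarrow> (\<integral>\<omega>. (\<Sum>l<L. indicator (block_missed a l) \<omega>) \<partial>P)"
  proof (rule integral_dominated_convergence[where w = "\<lambda>_. real L"])
    show "(\<lambda>\<omega>. \<Sum>l<L. indicator (block_missed a l) \<omega> :: real) \<in> borel_measurable P"
      using B_sets by measurable
    show "(\<lambda>\<omega>. block_miss_sum a (\<lambda>m. ramp k (Y m \<omega>)) L) \<in> borel_measurable P" for k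
      using block_miss_sum_Y_in_H[OF a] P by (rule measurable_H)
    show "AE \<omega> in P. norm (block_miss_sum a (\<lambda>m. ramp k (Y m \<omega>)) L) \<le> real L" for k
      using block_miss_sum_bounds ramp_bounds by (auto simp: abs_le_iff)
    show "AE \<omega> in P. (\<lambda>k. block_miss_sum a (\<lambda>m. ramp k (Y m \<omega>)) L)
        \<longlonglongrightarrow> (\<Sum>l<L. indicator (block_missed a l) \<omega>)"
      by (intro AE_I2 block_miss_sum_ramp_Y_tendsto)
  qed simp
  then have "(\<integral>\<omega>. (\<Sum>l<L. indicator (block_missed a l) \<omega>) \<partial>P) \<le> C"
    using bound by (intro LIMSEQ_le_const2) auto
  moreover have "(\<integral>\<omega>. (\<Sum>l<L. indicator (block_missed a l) \<omega>) \<partial>P) = (\<Sum>l<L. measure P (block_missed a l))"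
    using B_sets by (simp add: emeasure_eq_measure)
  ultimately show ?thesis
    by simp
qed

lemma block_borel_cantelli:
  assumes a: "strict_mono a"
    and v: "\<And>n k. v n \<le> E (\<lambda>\<omega>. ramp k (Y n \<omega>))"
    and C0: "\<And>L. block_miss_sum a v L \<le> C0"
  shows "\<exists>P\<in>Ps. limsup (block_missed a) \<in> null_sets P"
proof -
  obtain P where P: "P \<in> Ps"
    and bound: "\<And>k L. (\<integral>\<omega>. block_miss_sum a (\<lambda>m. ramp k (Y m \<omega>)) L \<partial>P) \<le> C0 + 1"
    using exists_P_block_miss_integrals_le[OF a v C0] by blast
  interpret prob_space P
    using P by (rule prob_space_Ps)
  have "summable (\<lambda>l. measure P (block_missed a l))"
  proof (rule bounded_imp_summable)
    show "(\<Sum>l\<le>L. measure P (block_missed a l)) \<le> C0 + 1" for L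
      using sum_measure_block_missed_le[OF a P bound, of "Suc L"] by (simp add: lessThan_Suc_atMost)
  qed simp
  then have "limsup (block_missed a) \<in> null_sets P"
    using sets_block_missed[OF P] by (intro borel_cantelli_limsup1) (auto simp: emeasure_eq_measure)
  with P show ?thesis
    by blast
qed

end

section \<open>Distances to closed sets and the choice of blocks\<close>

text \<open>\<open>infdist x {} = 0\<close>, so the empty set needs a case of its own.\<close>

definition trunc_infdist :: "nat \<Rightarrow> (nat \<Rightarrow> real) set \<Rightarrow> (nat \<Rightarrow> real) \<Rightarrow> real" where
  "trunc_infdist d G y = (if G = {} then 1 else min 1 (infdist (trunc d y) G))"

lemma trunc_infdist_bounds: "0 \<le> trunc_infdist d G y \<and> trunc_infdist d G y \<le> 1"
  by (simp add: trunc_infdist_def infdist_nonneg)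

text \<open>The metric of \<open>nat \<Rightarrow> real\<close> is \<open>\<Sum>n. (1/2)^n * min \<bar>x n - y n\<bar> 1\<close> (up to the enumeration
  \<open>from_nat\<close>), whence the factor \<open>2\<close>.\<close>

lemma dist_trunc_le: "dist (trunc d y) (trunc d y') \<le> 2 * vnorm {..<d} (\<lambda>i. y i - y' i)"
proof -
  define v where "v = vnorm {..<d} (\<lambda>i. y i - y' i)"
  have coord: "dist (trunc d y i) (trunc d y' i) \<le> v" for i
    using abs_le_vnorm[of "{..<d}" i "\<lambda>i. y i - y' i"] vnorm_nonneg[of "{..<d}" "\<lambda>i. y i - y' i"]
    by (simp add: v_def trunc_def dist_real_def)
  have geom: "summable (\<lambda>n. (1/2::real) ^ n * v)"
    by (intro summable_mult2 summable_geometric) simp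
  have le: "(1/2) ^ n * min (dist (trunc d y (from_nat n)) (trunc d y' (from_nat n))) 1 \<le> (1/2::real) ^ n * v"
    for n
    using coord[of "from_nat n"] by (intro mult_left_mono) auto
  have terms: "summable (\<lambda>n. (1/2::real) ^ n * min (dist (trunc d y (from_nat n)) (trunc d y' (from_nat n))) 1)"
    by (rule summable_comparison_test'[OF geom]) (use le in auto)
  have "dist (trunc d y) (trunc d y')
      = (\<Sum>n. (1/2) ^ n * min (dist (trunc d y (from_nat n)) (trunc d y' (from_nat n))) 1)"
    by (simp add: dist_fun_def)
  also have "\<dots> \<le> (\<Sum>n. (1/2::real) ^ n * v)"
    by (rule suminf_le[OF le terms geom])
  also have "\<dots> = 2 * v"
    using suminf_geometric[of "1/2::real"] by (simp add: suminf_mult2[symmetric])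
  finally show ?thesis
    unfolding v_def .
qed

lemma trunc_infdist_lipschitz:
  "\<bar>trunc_infdist d G y - trunc_infdist d G y'\<bar> \<le> 2 * vnorm {..<d} (\<lambda>i. y i - y' i)"
proof (cases "G = {}")
  case True
  then show ?thesis
    by (simp add: trunc_infdist_def vnorm_nonneg)
next
  case False
  have "\<bar>min 1 a - min 1 b\<bar> \<le> \<bar>a - b\<bar>" for a b :: real
    by (auto simp: min_def abs_if)
  then have "\<bar>trunc_infdist d G y - trunc_infdist d G y'\<bar> \<le> \<bar>infdist (trunc d y) G - infdist (trunc d y') G\<bar>"
    unfolding trunc_infdist_def using False by simp
  also have "\<dots> \<le> dist (trunc d y) (trunc d y')"
    by (rule infdist_triangle_abs)
  also have "\<dots> \<le> 2 * vnorm {..<d} (\<lambda>i. y i - y' i)"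
    by (rule dist_trunc_le)
  finally show ?thesis .
qed

lemma trunc_infdist_eq_0_iff:
  assumes "closed G"
  shows "trunc_infdist d G y = 0 \<longleftrightarrow> trunc d y \<in> G"
proof (cases "G = {}")
  case False
  then have "trunc_infdist d G y = 0 \<longleftrightarrow> infdist (trunc d y) G = 0"
    unfolding trunc_infdist_def using infdist_nonneg[of "trunc d y" G] by (auto simp: min_def)
  with in_closed_iff_infdist_zero[OF assms False] show ?thesis
    by simp
qed (simp add: trunc_infdist_def)

lemma continuous_on_lip_poly:
  fixes d :: nat
  assumes "lip_poly {..<d} f"
  shows "continuous_on UNIV f"
proof -
  obtain C m where Cm: "\<And>x y. \<bar>f x - f y\<bar> \<le> C * (1 + vnorm {..<d} x ^ m + vnorm {..<d} y ^ m) * vnorm {..<d} (\<lambda>i. x i - y i)"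
    using assms unfolding lip_poly_def by blast
  have coord: "((\<lambda>y::nat \<Rightarrow> real. y i) \<longlongrightarrow> x i) (at x)" for x i
    using continuous_on_product_coordinates[of i] unfolding continuous_on_def by blast
  have "(f \<longlongrightarrow> f x) (at x)" for x
  proof -
    define g where "g y = C * (1 + vnorm {..<d} y ^ m + vnorm {..<d} x ^ m) * vnorm {..<d} (\<lambda>i. y i - x i)" for y
    have "(g \<longlongrightarrow> g x) (at x)"
      unfolding g_def vnorm_def by (intro tendsto_intros) (rule coord)+
    moreover have "g x = 0"
      by (simp add: g_def vnorm_def)
    moreover have "norm (f y - f x) \<le> norm (g y) * 1" for y
      using Cm[of y x] by (simp add: g_def)
    ultimately have "((\<lambda>y. f y - f x) \<longlongrightarrow> 0) (at x)"
      using tendsto_0_le[of g "at x" "\<lambda>y. f y - f x" 1] by (simp add: always_eventually)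
    then show ?thesis
      by (simp add: LIM_zero_iff)
  qed
  then show ?thesis
    unfolding continuous_on_def by simp
qed

lemma lip_poly_trunc_eq:
  assumes "lip_poly {..<d} f"
  shows "f (trunc d y) = f y"
proof -
  obtain C m where Cm: "\<And>x y. \<bar>f x - f y\<bar> \<le> C * (1 + vnorm {..<d} x ^ m + vnorm {..<d} y ^ m) * vnorm {..<d} (\<lambda>i. x i - y i)"
    using assms unfolding lip_poly_def by blast
  have "vnorm {..<d} (\<lambda>i. trunc d y i - y i) = 0"
    by (simp add: vnorm_def trunc_def)
  then show ?thesis
    using Cm[of "trunc d y" y] by simp
qed

lemma closed_vanishing_from: "closed {x :: nat \<Rightarrow> real. \<forall>i\<ge>d. x i = 0}"
proof -
  have "{x :: nat \<Rightarrow> real. \<forall>i\<ge>d. x i = 0} = (\<Inter>i\<in>{d..}. {x. x i = 0})"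
    by auto
  then show ?thesis
    by (simp add: closed_INT closed_Collect_eq continuous_on_product_coordinates)
qed

lemma unbounded_tail_sums:
  fixes w :: "nat \<Rightarrow> real"
  assumes nonneg: "\<And>n. 0 \<le> w n" and diverge: "\<not> summable w"
  shows "\<exists>b>s. B \<le> (\<Sum>n\<in>{s..<b}. w n)"
proof (rule ccontr)
  assume "\<not> ?thesis"
  then have tail: "(\<Sum>n\<in>{s..<b}. w n) < B" if "s < b" for b
    using that by (meson not_le)
  have "(\<Sum>k\<le>n. w k) \<le> (\<Sum>k<s. w k) + B" for n
  proof -
    have "(\<Sum>k\<le>n. w k) \<le> (\<Sum>k<s + Suc n. w k)"
      using nonneg by (intro sum_mono2) auto
    also have "\<dots> = (\<Sum>k<s. w k) + (\<Sum>k\<in>{s..<s + Suc n}. w k)"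
      by (simp add: sum.atLeastLessThan_concat[symmetric] atLeast0LessThan[symmetric])
    finally show ?thesis
      using tail[of "s + Suc n"] by simp
  qed
  with nonneg diverge show False
    using bounded_imp_summable by blast
qed

lemma exists_blocks_large_sums:
  fixes w :: "nat \<Rightarrow> nat \<Rightarrow> real"
  assumes "\<And>j n. 0 \<le> w j n" "\<And>j. \<not> summable (w j)"
  obtains a where "strict_mono a" "\<And>l. real l \<le> (\<Sum>n\<in>{a l..<a (Suc l)}. w (fst (prod_decode l)) n)"
proof -
  define a where "a = rec_nat 0 (\<lambda>l al. LEAST b. al < b \<and> real l \<le> (\<Sum>n\<in>{al..<b}. w (fst (prod_decode l)) n))"
  have a_Suc: "a l < a (Suc l) \<and> real l \<le> (\<Sum>n\<in>{a l..<a (Suc l)}. w (fst (prod_decode l)) n)" for l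
    unfolding a_def rec_nat_Suc_imp[OF refl]
    by (rule LeastI_ex) (use unbounded_tail_sums assms in blast)
  then have "strict_mono a"
    by (simp add: strict_mono_Suc_iff)
  with a_Suc that show ?thesis
    by blast
qed

lemma Least_block_index:
  assumes "strict_mono a" "m \<in> {a l..<a (Suc l)}"
  shows "(LEAST l'. m < a (Suc l')) = l"
proof (rule Least_equality)
  show "m < a (Suc l)"
    using assms(2) by simp
next
  fix l'
  assume "m < a (Suc l')"
  with assms show "l \<le> l'"
    using strict_mono_less_eq[OF assms(1), of "Suc l'" l] by (auto simp: not_le[symmetric])
qed

lemma mem_Inter_limsup_if_blocks_hit:
  fixes A :: "nat \<Rightarrow> nat \<Rightarrow> 'a set"
  assumes "strict_mono a"
    and "\<forall>\<^sub>F l in sequentially. \<exists>m\<in>{a l..<a (Suc l)}. \<omega> \<in> A m (fst (prod_decode l))"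
  shows "\<omega> \<in> (\<Inter>j. limsup (\<lambda>n. A n j))"
proof -
  obtain L where L: "\<And>l. L \<le> l \<Longrightarrow> \<exists>m\<in>{a l..<a (Suc l)}. \<omega> \<in> A m (fst (prod_decode l))"
    using assms(2) unfolding eventually_sequentially by blast
  have "\<exists>n\<ge>N. \<omega> \<in> A n j" for j N
  proof -
    define l where "l = prod_encode (j, max L N)"
    have "max L N \<le> l" "fst (prod_decode l) = j"
      unfolding l_def by (simp_all add: le_prod_encode_2)
    with L obtain m where "m \<in> {a l..<a (Suc l)}" "\<omega> \<in> A m j"
      by fastforce
    moreover have "l \<le> a l"
      using seq_suble[OF assms(1)] .
    ultimately show ?thesis
      using \<open>max L N \<le> l\<close> by (intro exI[of _ m]) auto
  qed
  then show ?thesis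
    unfolding limsup_INF_SUP by auto
qed

lemma prod_one_minus_le_exp_neg_sum:
  fixes v :: "'i \<Rightarrow> real"
  assumes "finite S" "\<And>i. i \<in> S \<Longrightarrow> v i \<le> 1"
  shows "(\<Prod>i\<in>S. 1 - v i) \<le> exp (- (\<Sum>i\<in>S. v i))"
proof -
  have "(\<Prod>i\<in>S. 1 - v i) \<le> (\<Prod>i\<in>S. exp (- v i))"
    using assms(2) exp_minus_ge by (intro prod_mono) auto
  also have "\<dots> = exp (- (\<Sum>i\<in>S. v i))"
    using assms(1) by (simp add: exp_sum[symmetric] sum_negf)
  finally show ?thesis .
qed

lemma block_miss_sum_le_2:
  assumes "\<And>m. v m \<le> 1" "\<And>l. real l \<le> (\<Sum>m\<in>{a l..<a (Suc l)}. v m)"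
  shows "block_miss_sum a v L \<le> 2"
proof -
  have "(\<Prod>m\<in>{a l..<a (Suc l)}. 1 - v m) \<le> (1/2) ^ l" for l
  proof -
    have "(\<Prod>m\<in>{a l..<a (Suc l)}. 1 - v m) \<le> exp (- (\<Sum>m\<in>{a l..<a (Suc l)}. v m))"
      using assms(1) by (intro prod_one_minus_le_exp_neg_sum) auto
    also have "\<dots> \<le> exp (- real l)"
      using assms(2)[of l] by simp
    also have "\<dots> = exp (-1) ^ l"
      by (simp add: exp_of_nat_mult[symmetric])
    also have "\<dots> \<le> (1/2) ^ l"
      using exp_ge_add_one_self[of 1] by (intro power_mono) (auto simp: exp_minus field_simps)
    finally show ?thesis .
  qed
  then have "block_miss_sum a v L \<le> (\<Sum>l<L. (1/2::real) ^ l)"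
    unfolding block_miss_sum_def by (intro sum_mono)
  also have "\<dots> \<le> (\<Sum>l. (1/2::real) ^ l)"
    by (intro sum_le_suminf summable_geometric) auto
  also have "\<dots> = 2"
    using suminf_geometric[of "1/2::real"] by simp
  finally show ?thesis .
qed

lemma exists_row_blocks:
  fixes w :: "nat \<Rightarrow> nat \<Rightarrow> real"
  assumes "\<And>j n. 0 \<le> w j n \<and> w j n \<le> 1" "\<And>j. \<not> summable (w j)"
  obtains a J where "strict_mono a" "\<And>m l. m \<in> {a l..<a (Suc l)} \<Longrightarrow> J m = fst (prod_decode l)"
    "\<And>L. block_miss_sum a (\<lambda>n. w (J n) n) L \<le> 2"
proof -
  obtain a where a: "strict_mono a"
    and block_sums: "\<And>l. real l \<le> (\<Sum>n\<in>{a l..<a (Suc l)}. w (fst (prod_decode l)) n)"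
    using exists_blocks_large_sums[of w] assms by blast
  define J where "J n = fst (prod_decode (LEAST l. n < a (Suc l)))" for n
  have J: "J m = fst (prod_decode l)" if "m \<in> {a l..<a (Suc l)}" for m l
    unfolding J_def using Least_block_index[OF a that] by simp
  have "block_miss_sum a (\<lambda>n. w (J n) n) L \<le> 2" for L
  proof (rule block_miss_sum_le_2)
    show "w (J m) m \<le> 1" for m
      using assms(1) by simp
    show "real l \<le> (\<Sum>m\<in>{a l..<a (Suc l)}. w (J m) m)" for l
    proof -
      have "(\<Sum>m\<in>{a l..<a (Suc l)}. w (J m) m) = (\<Sum>m\<in>{a l..<a (Suc l)}. w (fst (prod_decode l)) m)"
        using J by (intro sum.cong) auto
      with block_sums[of l] show ?thesis
        by simp
    qed
  qed
  with a J that show ?thesis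
    by blast
qed

context sublinear_capacity_space
begin

lemma indep_transform_trunc_infdist:
  assumes "indep_seq_vec H E d X"
  shows "indep_transform H E Ps F V d X (\<lambda>n. trunc_infdist (d n) (G n)) 2"
proof (rule indep_transform.intro[OF sublinear_capacity_space_axioms])
  show "indep_transform_axioms H E d X (\<lambda>n. trunc_infdist (d n) (G n)) 2"
    using assms trunc_infdist_bounds trunc_infdist_lipschitz by unfold_locales auto
qed

lemma sets_trunc_in_closed:
  assumes "indep_seq_vec H E d X" "closed_Rd (d n) G" "P \<in> Ps"
  shows "{\<omega>. trunc (d n) (X n \<omega>) \<in> G} \<in> sets P"
proof -
  interpret T: indep_transform H E Ps F V d X "\<lambda>m. trunc_infdist (d m) G" 2
    using assms(1) by (rule indep_transform_trunc_infdist)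
  have "{\<omega>. trunc (d n) (X n \<omega>) \<in> G} = T.Y n -` {0} \<inter> space P"
    using assms(2) trunc_infdist_eq_0_iff by (auto simp: T.Y_def closed_Rd_def space_Ps[OF assms(3)])
  also have "\<dots> \<in> sets P"
    using T.measurable_Y[OF assms(3)] by (rule measurable_sets) simp
  finally show ?thesis .
qed

lemma exists_P_limsup_notin_closed_null:
  fixes G :: "nat \<Rightarrow> (nat \<Rightarrow> real) set"
  assumes ind: "indep_seq_vec H E d X" and closed: "\<And>n. closed_Rd (d n) (G n)"
    and notin_F: "\<And>n. {\<omega>. trunc (d n) (X n \<omega>) \<notin> G n} \<in> F"
    and converge: "summable (\<lambda>n. conj_cap V {\<omega>. trunc (d n) (X n \<omega>) \<notin> G n})"
  shows "\<exists>P\<in>Ps. measure P (limsup (\<lambda>n. {\<omega>. trunc (d n) (X n \<omega>) \<notin> G n})) = 0"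
proof -
  interpret T: indep_transform H E Ps F V d X "\<lambda>n. trunc_infdist (d n) (G n)" 2
    using ind by (rule indep_transform_trunc_infdist)
  define A where "A n = {\<omega>. trunc (d n) (X n \<omega>) \<in> G n}" for n
  have compl_A: "- {\<omega>. trunc (d n) (X n \<omega>) \<notin> G n} = A n" for n
    by (auto simp: A_def)
  have Y_eq_0: "T.Y n \<omega> = 0 \<longleftrightarrow> \<omega> \<in> A n" for n \<omega>
    using closed trunc_infdist_eq_0_iff by (simp add: T.Y_def A_def closed_Rd_def)
  have A_F: "A n \<in> F" for n
    using Compl_in_F[OF notin_F[of n]] by (simp add: compl_A)
  have V_le: "V (A n) \<le> E (\<lambda>\<omega>. ramp k (T.Y n \<omega>))" for n k
    using ramp_bounds by (intro V_le_E[OF A_F T.ramp_Y_in_H]) (auto simp: indicator_def Y_eq_0[symmetric])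
  have miss_le: "block_miss_sum id (\<lambda>n. V (A n)) L \<le> (\<Sum>n. conj_cap V {\<omega>. trunc (d n) (X n \<omega>) \<notin> G n})"
    for L
  proof -
    have "block_miss_sum id (\<lambda>n. V (A n)) L = (\<Sum>n<L. conj_cap V {\<omega>. trunc (d n) (X n \<omega>) \<notin> G n})"
      by (simp add: block_miss_sum_def conj_cap_def compl_A)
    also have "\<dots> \<le> (\<Sum>n. conj_cap V {\<omega>. trunc (d n) (X n \<omega>) \<notin> G n})"
      using converge V_bounds[OF A_F] by (intro sum_le_suminf) (auto simp: conj_cap_def compl_A)
    finally show ?thesis .
  qed
  obtain P where P: "P \<in> Ps"
    and "limsup (T.block_missed id) \<in> null_sets P"
    using T.block_borel_cantelli[OF strict_mono_id V_le miss_le] by blast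
  moreover have "T.block_missed id = (\<lambda>n. {\<omega>. trunc (d n) (X n \<omega>) \<notin> G n})"
    using Y_eq_0 by (auto simp: T.block_missed_def A_def)
  ultimately have "limsup (\<lambda>n. {\<omega>. trunc (d n) (X n \<omega>) \<notin> G n}) \<in> null_sets P"
    by simp
  with P show ?thesis
    by (intro bexI[of _ P]) (simp_all add: measure_def null_setsD1)
qed

lemma exists_P_Inter_limsup_in_closed_full:
  fixes G :: "nat \<Rightarrow> nat \<Rightarrow> (nat \<Rightarrow> real) set"
  assumes ind: "indep_seq_vec H E d X" and closed: "\<And>n j. closed_Rd (d n) (G n j)"
    and in_F: "\<And>n j. {\<omega>. trunc (d n) (X n \<omega>) \<in> G n j} \<in> F"
    and diverge: "\<And>j. \<not> summable (\<lambda>n. V {\<omega>. trunc (d n) (X n \<omega>) \<in> G n j})"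
  shows "\<exists>P\<in>Ps. measure P (\<Inter>j. limsup (\<lambda>n. {\<omega>. trunc (d n) (X n \<omega>) \<in> G n j})) = 1"
proof -
  define A where "A n j = {\<omega>. trunc (d n) (X n \<omega>) \<in> G n j}" for n j
  have A_F: "A n j \<in> F" for n j
    unfolding A_def by (rule in_F)
  obtain a J where a: "strict_mono a" and J: "\<And>m l. m \<in> {a l..<a (Suc l)} \<Longrightarrow> J m = fst (prod_decode l)"
    and miss: "\<And>L. block_miss_sum a (\<lambda>n. V (A n (J n))) L \<le> 2"
    using exists_row_blocks[of "\<lambda>j n. V (A n j)"] V_bounds[OF A_F] diverge unfolding A_def by blast
  interpret T: indep_transform H E Ps F V d X "\<lambda>n. trunc_infdist (d n) (G n (J n))" 2
    using ind by (rule indep_transform_trunc_infdist)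
  have Y_eq_0: "T.Y n \<omega> = 0 \<longleftrightarrow> \<omega> \<in> A n (J n)" for n \<omega>
    using closed trunc_infdist_eq_0_iff by (simp add: T.Y_def A_def closed_Rd_def)
  have V_le: "V (A n (J n)) \<le> E (\<lambda>\<omega>. ramp k (T.Y n \<omega>))" for n k
    using ramp_bounds
    by (intro V_le_E[OF A_F T.ramp_Y_in_H]) (auto simp: indicator_def Y_eq_0[symmetric])
  obtain P where P: "P \<in> Ps" and null: "limsup (T.block_missed a) \<in> null_sets P"
    using T.block_borel_cantelli[OF a V_le miss] by blast
  interpret prob_space P
    using P by (rule prob_space_Ps)
  have "\<omega> \<in> (\<Inter>j. limsup (\<lambda>n. A n j))" if "\<omega> \<notin> limsup (T.block_missed a)" for \<omega>
  proof (rule mem_Inter_limsup_if_blocks_hit[OF a])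
    have "\<forall>\<^sub>F l in sequentially. \<omega> \<notin> T.block_missed a l"
      using that unfolding limsup_INF_SUP eventually_sequentially by auto
    then show "\<forall>\<^sub>F l in sequentially. \<exists>m\<in>{a l..<a (Suc l)}. \<omega> \<in> A m (fst (prod_decode l))"
      by (rule eventually_mono) (auto simp: T.block_missed_def Y_eq_0 J)
  qed
  then have "AE \<omega> in P. \<omega> \<in> (\<Inter>j. limsup (\<lambda>n. A n j))"
    using null by (intro AE_I'[of "limsup _"]) auto
  moreover have "(\<Inter>j. limsup (\<lambda>n. A n j)) \<in> sets P"
    using sets_trunc_in_closed[OF ind closed P] unfolding A_def by measurable
  ultimately show ?thesis
    using P prob_eq_1 unfolding A_def by blast
qed

lemma exists_P_limsup_less_one_null:
  fixes X :: "nat \<Rightarrow> 'a \<Rightarrow> real"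
  assumes "indep_seq_rv H E X" "\<And>n. {\<omega>. X n \<omega> < 1} \<in> F"
    and "summable (\<lambda>n. conj_cap V {\<omega>. X n \<omega> < 1})"
  shows "\<exists>P\<in>Ps. measure P (limsup (\<lambda>n. {\<omega>. X n \<omega> < 1})) = 0"
proof -
  define G where "G = {x :: nat \<Rightarrow> real. 1 \<le> x 0 \<and> (\<forall>i\<ge>1. x i = 0)}"
  have "G = {x. 1 \<le> x 0} \<inter> {x. \<forall>i\<ge>1. x i = 0}"
    by (auto simp: G_def)
  then have "closed_Rd 1 G"
    unfolding closed_Rd_def
    by (auto simp: G_def intro!: closed_Int closed_vanishing_from closed_Collect_le
        continuous_on_product_coordinates)
  moreover have "{\<omega>. trunc 1 (\<lambda>_. X n \<omega>) \<notin> G} = {\<omega>. X n \<omega> < 1}" for n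
    by (auto simp: G_def trunc_def)
  ultimately show ?thesis
    using exists_P_limsup_notin_closed_null[of "\<lambda>_. 1" "\<lambda>n \<omega> _. X n \<omega>" "\<lambda>_. G"] assms
    unfolding indep_seq_rv_def by simp
qed

lemma exists_P_Inter_limsup_ge_one_full:
  fixes f :: "nat \<Rightarrow> nat \<Rightarrow> (nat \<Rightarrow> real) \<Rightarrow> real"
  assumes "indep_seq_vec H E d X" and lip: "\<And>n j. lip_poly {..<d n} (f n j)"
    and "\<And>n j. {\<omega>. f n j (X n \<omega>) \<ge> 1} \<in> F"
    and "\<And>j. \<not> summable (\<lambda>n. V {\<omega>. f n j (X n \<omega>) \<ge> 1})"
  shows "\<exists>P\<in>Ps. measure P (\<Inter>j. limsup (\<lambda>n. {\<omega>. f n j (X n \<omega>) \<ge> 1})) = 1"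
proof -
  define G where "G n j = {x. 1 \<le> f n j x} \<inter> {x. \<forall>i\<ge>d n. x i = 0}" for n j
  have "closed_Rd (d n) (G n j)" for n j
    unfolding closed_Rd_def G_def
    by (auto intro!: closed_Int closed_vanishing_from closed_Collect_le continuous_on_const
        continuous_on_lip_poly[OF lip])
  moreover have "{\<omega>. trunc (d n) (X n \<omega>) \<in> G n j} = {\<omega>. f n j (X n \<omega>) \<ge> 1}" for n j
    using lip_poly_trunc_eq[OF lip] by (auto simp: G_def trunc_def)
  ultimately show ?thesis
    using exists_P_Inter_limsup_in_closed_full[of d X G] assms by simp
qed

end

theorem lemma4p4:
  fixes H :: "('a \<Rightarrow> real) set" and E :: "('a \<Rightarrow> real) \<Rightarrow> real"
    and \<P> :: "'a measure set" and F :: "'a set set" and V :: "'a set \<Rightarrow> real"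
  assumes SLE: "sublinear_expectation_space H E"
    and CC: "condition_CC H E \<P>"
    and F: "sigma_algebra UNIV F"
    and V: "subadd_capacity F V"
    and VE: "capacity_between H E F V"
  shows
   "(\<forall>X::nat \<Rightarrow> 'a \<Rightarrow> real.
       indep_seq_rv H E X \<longrightarrow> (\<forall>n. {\<omega>. X n \<omega> < 1} \<in> F) \<longrightarrow>
       summable (\<lambda>n. conj_cap V {\<omega>. X n \<omega> < 1}) \<longrightarrow>
       (\<exists>P\<in>\<P>. measure P (limsup (\<lambda>n. {\<omega>. X n \<omega> < 1})) = 0))
    \<and>
    (\<forall>(d::nat \<Rightarrow> nat) (X::nat \<Rightarrow> 'a \<Rightarrow> nat \<Rightarrow> real) (f::nat \<Rightarrow> nat \<Rightarrow> (nat \<Rightarrow> real) \<Rightarrow> real).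
       indep_seq_vec H E d X \<longrightarrow> (\<forall>n j. lip_poly {..<d n} (f n j)) \<longrightarrow>
       (\<forall>n j. {\<omega>. f n j (X n \<omega>) \<ge> 1} \<in> F) \<longrightarrow>
       (\<forall>j. \<not> summable (\<lambda>n. V {\<omega>. f n j (X n \<omega>) \<ge> 1})) \<longrightarrow>
       (\<exists>P\<in>\<P>. measure P (\<Inter>j. limsup (\<lambda>n. {\<omega>. f n j (X n \<omega>) \<ge> 1})) = 1))
    \<and>
    (\<forall>(d::nat \<Rightarrow> nat) (X::nat \<Rightarrow> 'a \<Rightarrow> nat \<Rightarrow> real) (Fc::nat \<Rightarrow> (nat \<Rightarrow> real) set).
       indep_seq_vec H E d X \<longrightarrow> (\<forall>n. closed_Rd (d n) (Fc n)) \<longrightarrow>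
       (\<forall>n. {\<omega>. trunc (d n) (X n \<omega>) \<notin> Fc n} \<in> F) \<longrightarrow>
       summable (\<lambda>n. conj_cap V {\<omega>. trunc (d n) (X n \<omega>) \<notin> Fc n}) \<longrightarrow>
       (\<exists>P\<in>\<P>. measure P (limsup (\<lambda>n. {\<omega>. trunc (d n) (X n \<omega>) \<notin> Fc n})) = 0))
    \<and>
    (\<forall>(d::nat \<Rightarrow> nat) (X::nat \<Rightarrow> 'a \<Rightarrow> nat \<Rightarrow> real) (Fc::nat \<Rightarrow> nat \<Rightarrow> (nat \<Rightarrow> real) set).
       indep_seq_vec H E d X \<longrightarrow> (\<forall>n j. closed_Rd (d n) (Fc n j)) \<longrightarrow>
       (\<forall>n j. {\<omega>. trunc (d n) (X n \<omega>) \<in> Fc n j} \<in> F) \<longrightarrow>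
       (\<forall>j. \<not> summable (\<lambda>n. V {\<omega>. trunc (d n) (X n \<omega>) \<in> Fc n j})) \<longrightarrow>
       (\<exists>P\<in>\<P>. measure P (\<Inter>j. limsup (\<lambda>n. {\<omega>. trunc (d n) (X n \<omega>) \<in> Fc n j})) = 1))"
proof -
  interpret sublinear_capacity_space H E \<P> F V
    using SLE CC F V VE by (rule sublinear_capacity_space.intro)
  show ?thesis
    by (intro conjI allI impI)
      (rule exists_P_limsup_less_one_null exists_P_Inter_limsup_ge_one_full
        exists_P_limsup_notin_closed_null exists_P_Inter_limsup_in_closed_full; auto)+
qed

end
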